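(* Let $\mathfrak C$ be a monster model of a complete theory $T$. Let $\pi_1(\bar x,\bar y),\dots,\pi_n(\bar x,\bar y)$ be partial types without parameters, with $\bar x,\bar y$ short tuples of variables of the same length and sorts, let $\bar a$ be a tuple from $\mathfrak C$ corresponding to $\bar x$ (and $\bar y$), and let $\epsilon_1,\dots,\epsilon_n\in\{-1,1\}$. (i) $A_{\pi_1,\bar a}^{\epsilon_1}\cdots A_{\pi_n,\bar a}^{\epsilon_n}=\bigcap\{A_{\varphi_1,\bar a}^{\epsilon_1}\cdots A_{\varphi_n,\bar a}^{\epsilon_n}:\varphi_i(\bar x,\bar y)\text{ formulas with }\pi_1\vdash\varphi_1,\dots,\pi_n\vdash\varphi_n\}$. (ii) If $A_{\pi_1,\bar a}^{\epsilon_1}\cdots A_{\pi_n,\bar a}^{\epsilon_n}$ is contained in a relatively definable subset $A$ of $\mathrm{Aut}(\mathfrak C)$, then there are formulas $\varphi_i(\bar x,\bar y)$ implied by $\pi_i(\bar x,\bar y)$, $i=1,\dots,n$, such that $A_{\varphi_1,\bar a}^{\epsilon_1}\cdots A_{\varphi_n,\bar a}^{\epsilon_n}\subseteq A$.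
   Context: $\mathfrak C$ is $\kappa$-saturated and strongly $\kappa$-homogeneous ($\kappa$ large); short means of length $<\kappa$. For a partial type (or formula) $\pi(\bar x,\bar y)$ without parameters and a tuple $\bar a$ from $\mathfrak C$, $A_{\pi,\bar a}=\{\sigma\in\mathrm{Aut}(\mathfrak C):\mathfrak C\models\pi(\sigma(\bar a),\bar a)\}$. A relatively definable subset of $\mathrm{Aut}(\mathfrak C)$ is one of the form $\{\sigma\in\mathrm{Aut}(\mathfrak C):\mathfrak C\models\psi(\sigma(\bar d),\bar e)\}$ for a formula $\psi$ without parameters and tuples $\bar d,\bar e$ from $\mathfrak C$. $X^{1}=X$ and $X^{-1}=\{\sigma^{-1}:\sigma\in X\}$; products are taken in the group. *)

theory Defs
  imports Main "HOL-Library.Equipollence"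
begin

datatype ('f,'v) trm = Var 'v | App 'f "('f,'v) trm list"

datatype ('f,'r,'v) fm =
    FEq "('f,'v) trm" "('f,'v) trm"
  | FRel 'r "('f,'v) trm list"
  | FNeg "('f,'r,'v) fm"
  | FConj "('f,'r,'v) fm" "('f,'r,'v) fm"
  | FEx 'v "('f,'r,'v) fm"

record ('s,'f,'r,'v) lang =
  fsig :: "'f \<Rightarrow> 's list \<times> 's"
  rsig :: "'r \<Rightarrow> 's list"
  vsort :: "'v \<Rightarrow> 's"

inductive wt :: "('s,'f,'r,'v) lang \<Rightarrow> ('f,'v) trm \<Rightarrow> 's \<Rightarrow> bool" for L where
  "vsort L z = s \<Longrightarrow> wt L (Var z) s"
| "fsig L f = (ss, s) \<Longrightarrow> list_all2 (wt L) ts ss \<Longrightarrow> wt L (App f ts) s"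

primrec wf_fm :: "('s,'f,'r,'v) lang \<Rightarrow> ('f,'r,'v) fm \<Rightarrow> bool" where
  "wf_fm L (FEq t u) = (\<exists>s. wt L t s \<and> wt L u s)"
| "wf_fm L (FRel r ts) = list_all2 (wt L) ts (rsig L r)"
| "wf_fm L (FNeg \<phi>) = wf_fm L \<phi>"
| "wf_fm L (FConj \<phi> \<psi>) = (wf_fm L \<phi> \<and> wf_fm L \<psi>)"
| "wf_fm L (FEx z \<phi>) = wf_fm L \<phi>"

fun fvt :: "('f,'v) trm \<Rightarrow> 'v set" where
  "fvt (Var z) = {z}"
| "fvt (App f ts) = (\<Union>t\<in>set ts. fvt t)"

primrec fv :: "('f,'r,'v) fm \<Rightarrow> 'v set" where
  "fv (FEq t u) = fvt t \<union> fvt u"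
| "fv (FRel r ts) = (\<Union>t\<in>set ts. fvt t)"
| "fv (FNeg \<phi>) = fv \<phi>"
| "fv (FConj \<phi> \<psi>) = fv \<phi> \<union> fv \<psi>"
| "fv (FEx z \<phi>) = fv \<phi> - {z}"

definition sentence :: "('s,'f,'r,'v) lang \<Rightarrow> ('f,'r,'v) fm \<Rightarrow> bool" where
  "sentence L \<phi> \<longleftrightarrow> wf_fm L \<phi> \<and> fv \<phi> = {}"

record ('s,'f,'r,'a) struc =
  carr :: "'a set"
  esort :: "'a \<Rightarrow> 's"
  funs :: "'f \<Rightarrow> 'a list \<Rightarrow> 'a"
  rels :: "'r \<Rightarrow> 'a list \<Rightarrow> bool"

definition wf_struc :: "('s,'f,'r,'v) lang \<Rightarrow> ('s,'f,'r,'a) struc \<Rightarrow> bool" where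
  "wf_struc L S \<longleftrightarrow>
     (\<forall>s. \<exists>b\<in>carr S. esort S b = s) \<and>
     (\<forall>f args. set args \<subseteq> carr S \<and> map (esort S) args = fst (fsig L f) \<longrightarrow>
        funs S f args \<in> carr S \<and> esort S (funs S f args) = snd (fsig L f))"

fun eval :: "('s,'f,'r,'a) struc \<Rightarrow> ('v \<Rightarrow> 'a) \<Rightarrow> ('f,'v) trm \<Rightarrow> 'a" where
  "eval S v (Var z) = v z"
| "eval S v (App f ts) = funs S f (map (eval S v) ts)"

primrec sat :: "('s,'f,'r,'v) lang \<Rightarrow> ('s,'f,'r,'a) struc \<Rightarrow> ('v \<Rightarrow> 'a) \<Rightarrow> ('f,'r,'v) fm \<Rightarrow> bool" where
  "sat L S v (FEq t u) = (eval S v t = eval S v u)"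
| "sat L S v (FRel r ts) = rels S r (map (eval S v) ts)"
| "sat L S v (FNeg \<phi>) = (\<not> sat L S v \<phi>)"
| "sat L S v (FConj \<phi> \<psi>) = (sat L S v \<phi> \<and> sat L S v \<psi>)"
| "sat L S v (FEx z \<phi>) = (\<exists>b\<in>carr S. esort S b = vsort L z \<and> sat L S (v(z := b)) \<phi>)"

definition assignment :: "('s,'f,'r,'v) lang \<Rightarrow> ('s,'f,'r,'a) struc \<Rightarrow> ('v \<Rightarrow> 'a) \<Rightarrow> bool" where
  "assignment L S v \<longleftrightarrow> (\<forall>z. v z \<in> carr S \<and> esort S (v z) = vsort L z)"

definition is_model :: "('s,'f,'r,'v) lang \<Rightarrow> ('s,'f,'r,'a) struc \<Rightarrow> ('f,'r,'v) fm set \<Rightarrow> bool" where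
  "is_model L S T \<longleftrightarrow> wf_struc L S \<and> (\<forall>\<phi>\<in>T. \<forall>v. sat L S v \<phi>)"

text \<open>Semantic consequence modulo T (\<open>\<Gamma> \<turnstile> \<phi>\<close> in T), over all models of T whose universe
  lies in the type 'a. Since 'a contains the monster model, by downward
  Loewenheim-Skolem this is the usual notion.\<close>
definition entails :: "('s,'f,'r,'v) lang \<Rightarrow> ('f,'r,'v) fm set \<Rightarrow> ('f,'r,'v) fm set
                        \<Rightarrow> ('f,'r,'v) fm \<Rightarrow> 'a itself \<Rightarrow> bool" where
  "entails L T \<Gamma> \<phi> _ \<longleftrightarrow>
     (\<forall>(N :: ('s,'f,'r,'a) struc) v. is_model L N T \<and> assignment L N v \<longrightarrow>
        (\<forall>\<psi>\<in>\<Gamma>. sat L N v \<psi>) \<longrightarrow> sat L N v \<phi>)"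

definition complete_theory :: "('s,'f,'r,'v) lang \<Rightarrow> ('f,'r,'v) fm set \<Rightarrow> 'a itself \<Rightarrow> bool" where
  "complete_theory L T A \<longleftrightarrow>
     (\<forall>\<phi>\<in>T. sentence L \<phi>) \<and>
     (\<exists>N :: ('s,'f,'r,'a) struc. is_model L N T) \<and>
     (\<forall>\<phi>. sentence L \<phi> \<longrightarrow> entails L T T \<phi> A \<or> entails L T T (FNeg \<phi>) A)"

definition Aut :: "('s,'f,'r,'v) lang \<Rightarrow> ('s,'f,'r,'a) struc \<Rightarrow> ('a \<Rightarrow> 'a) set" where
  "Aut L M = {\<sigma>. bij_betw \<sigma> (carr M) (carr M) \<and> (\<forall>z. z \<notin> carr M \<longrightarrow> \<sigma> z = z) \<and>
     (\<forall>b\<in>carr M. esort M (\<sigma> b) = esort M b) \<and>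
     (\<forall>f args. set args \<subseteq> carr M \<and> map (esort M) args = fst (fsig L f) \<longrightarrow>
         \<sigma> (funs M f args) = funs M f (map \<sigma> args)) \<and>
     (\<forall>r args. set args \<subseteq> carr M \<and> map (esort M) args = rsig L r \<longrightarrow>
         (rels M r (map \<sigma> args) \<longleftrightarrow> rels M r args))}"

text \<open>Group inverse in Aut(M) (automorphisms are the identity outside the universe).\<close>
definition ginv :: "('s,'f,'r,'a) struc \<Rightarrow> ('a \<Rightarrow> 'a) \<Rightarrow> ('a \<Rightarrow> 'a)" where
  "ginv M \<sigma> = (\<lambda>z. if z \<in> carr M then inv_into (carr M) \<sigma> z else z)"

definition setpow :: "('s,'f,'r,'a) struc \<Rightarrow> ('a \<Rightarrow> 'a) set \<Rightarrow> int \<Rightarrow> ('a \<Rightarrow> 'a) set" where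
  "setpow M X e = (if e = 1 then X else ginv M ` X)"

definition setmul :: "('a \<Rightarrow> 'a) set \<Rightarrow> ('a \<Rightarrow> 'a) set \<Rightarrow> ('a \<Rightarrow> 'a) set" where
  "setmul X Y = {\<sigma> \<circ> \<tau> | \<sigma> \<tau>. \<sigma> \<in> X \<and> \<tau> \<in> Y}"

text \<open>\<open>setprods M X e n = X_0^{e_0} \<cdots> X_{n-1}^{e_{n-1}}\<close> (indices shifted to start at 0).\<close>
fun setprods :: "('s,'f,'r,'a) struc \<Rightarrow> (nat \<Rightarrow> ('a \<Rightarrow> 'a) set) \<Rightarrow> (nat \<Rightarrow> int) \<Rightarrow> nat
                 \<Rightarrow> ('a \<Rightarrow> 'a) set" where
  "setprods M X e 0 = {id}"
| "setprods M X e (Suc k) = setmul (setprods M X e k) (setpow M (X k) (e k))"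

text \<open>\<open>\<kappa>\<close> is represented as the cardinality of a set K; "short" means \<open>\<prec> K\<close>.\<close>

definition saturated :: "('s,'f,'r,'v) lang \<Rightarrow> ('s,'f,'r,'a) struc \<Rightarrow> 'k set \<Rightarrow> bool" where
  "saturated L M K \<longleftrightarrow>
    (\<forall>B z \<Phi> e. B \<subseteq> carr M \<and> B \<prec> K \<and>
       (\<forall>\<phi>\<in>\<Phi>. wf_fm L \<phi> \<and> (\<forall>w\<in>fv \<phi> - {z}. e w \<in> B \<and> esort M (e w) = vsort L w)) \<and>
       (\<forall>\<Phi>0. \<Phi>0 \<subseteq> \<Phi> \<and> finite \<Phi>0 \<longrightarrow>
          (\<exists>b\<in>carr M. esort M b = vsort L z \<and> (\<forall>\<phi>\<in>\<Phi>0. sat L M (e(z := b)) \<phi>)))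
     \<longrightarrow> (\<exists>b\<in>carr M. esort M b = vsort L z \<and> (\<forall>\<phi>\<in>\<Phi>. sat L M (e(z := b)) \<phi>)))"

definition elementary_on :: "('s,'f,'r,'v) lang \<Rightarrow> ('s,'f,'r,'a) struc \<Rightarrow> 'a set \<Rightarrow> ('a \<Rightarrow> 'a) \<Rightarrow> bool" where
  "elementary_on L M B f \<longleftrightarrow>
     (\<forall>b\<in>B. f b \<in> carr M \<and> esort M (f b) = esort M b) \<and>
     (\<forall>\<phi> e. wf_fm L \<phi> \<and> (\<forall>w\<in>fv \<phi>. e w \<in> B \<and> esort M (e w) = vsort L w) \<longrightarrow>
        (sat L M e \<phi> \<longleftrightarrow> sat L M (f \<circ> e) \<phi>))"

definition strongly_homogeneous :: "('s,'f,'r,'v) lang \<Rightarrow> ('s,'f,'r,'a) struc \<Rightarrow> 'k set \<Rightarrow> bool" where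
  "strongly_homogeneous L M K \<longleftrightarrow>
    (\<forall>B f. B \<subseteq> carr M \<and> B \<prec> K \<and> elementary_on L M B f \<longrightarrow>
       (\<exists>\<sigma>\<in>Aut L M. \<forall>b\<in>B. \<sigma> b = f b))"

text \<open>M is a monster model of the complete theory T: a model of T which is
  \<open>\<kappa>\<close>-saturated and strongly \<open>\<kappa>\<close>-homogeneous, with \<open>\<kappa> = |K|\<close> large, i.e.
  \<open>\<kappa> > |T| = |L| + \<aleph>\<^sub>0\<close>; there are at least \<open>\<kappa>\<close> variables of every sort.\<close>
definition monster :: "('s,'f,'r,'v) lang \<Rightarrow> ('f,'r,'v) fm set \<Rightarrow> ('s,'f,'r,'a) struc
                       \<Rightarrow> 'k set \<Rightarrow> bool" where
  "monster L T M K \<longleftrightarrow>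
     complete_theory L T TYPE('a) \<and> is_model L M T \<and>
     infinite K \<and> (UNIV :: 's set) \<prec> K \<and> (UNIV :: 'f set) \<prec> K \<and> (UNIV :: 'r set) \<prec> K \<and>
     (\<forall>s. K \<lesssim> {z. vsort L z = s}) \<and>
     saturated L M K \<and> strongly_homogeneous L M K"

definition fm_in :: "('s,'f,'r,'v) lang \<Rightarrow> ('i \<Rightarrow> 'v) \<Rightarrow> ('i \<Rightarrow> 'v) \<Rightarrow> ('f,'r,'v) fm \<Rightarrow> bool" where
  "fm_in L x y \<phi> \<longleftrightarrow> wf_fm L \<phi> \<and> fv \<phi> \<subseteq> range x \<union> range y"

definition tup_asg :: "('i \<Rightarrow> 'v) \<Rightarrow> ('i \<Rightarrow> 'v) \<Rightarrow> ('a \<Rightarrow> 'a) \<Rightarrow> ('i \<Rightarrow> 'a) \<Rightarrow> 'v \<Rightarrow> 'a" where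
  "tup_asg x y \<sigma> a = (\<lambda>z. if z \<in> range x then \<sigma> (a (inv x z))
                         else if z \<in> range y then a (inv y z) else undefined)"

definition A_set :: "('s,'f,'r,'v) lang \<Rightarrow> ('s,'f,'r,'a) struc \<Rightarrow> ('f,'r,'v) fm set
                     \<Rightarrow> ('i \<Rightarrow> 'v) \<Rightarrow> ('i \<Rightarrow> 'v) \<Rightarrow> ('i \<Rightarrow> 'a) \<Rightarrow> ('a \<Rightarrow> 'a) set" where
  "A_set L M \<pi> x y a = {\<sigma>\<in>Aut L M. \<forall>\<phi>\<in>\<pi>. sat L M (tup_asg x y \<sigma> a) \<phi>}"

text \<open>\<open>{\<sigma> \<in> Aut(M). M \<Turnstile> \<psi>(\<sigma>(d), e)}\<close>: the variables in U get the (moved) parameters d,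
  the others the fixed parameters e.\<close>
definition rel_definable :: "('s,'f,'r,'v) lang \<Rightarrow> ('s,'f,'r,'a) struc \<Rightarrow> ('a \<Rightarrow> 'a) set \<Rightarrow> bool" where
  "rel_definable L M A \<longleftrightarrow>
     (\<exists>\<psi> U d e. wf_fm L \<psi> \<and>
        (\<forall>z\<in>fv \<psi> \<inter> U. d z \<in> carr M \<and> esort M (d z) = vsort L z) \<and>
        (\<forall>z\<in>fv \<psi> - U. e z \<in> carr M \<and> esort M (e z) = vsort L z) \<and>
        A = {\<sigma>\<in>Aut L M. sat L M (\<lambda>z. if z \<in> U then \<sigma> (d z) else e z) \<psi>})"

end

theory Submission
  imports Defs
begin

text \<open>An automorphism \<open>\<sigma>\<close> lies in \<open>A\<^bsub>\<pi>\<^sub>1,a\<^esub>\<^bsup>\<epsilon>\<^sub>1\<^esup> \<cdots> A\<^bsub>\<pi>\<^sub>n,a\<^esub>\<^bsup>\<epsilon>\<^sub>n\<^esup>\<close> iff there is a chain of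
  conjugates \<open>\<sigma>\<inverse>(a) = c\<^sub>0, c\<^sub>1, \<dots>, c\<^sub>n = a\<close> of \<open>a\<close> in which consecutive tuples satisfy
  \<open>\<pi>\<^sub>k\<close> (in the order given by \<open>\<epsilon>\<^sub>k\<close>).
  For (i), if \<open>\<sigma>\<close> lies in all the products for finitely many consequences of the \<open>\<pi>\<^sub>k\<close>, the
  existence of such a chain is a finitely satisfiable type, over \<open>\<sigma>\<inverse>(a)\<close> and \<open>a\<close>, in the
  fewer than \<open>\<kappa>\<close> variables of \<open>n - 1\<close> fresh copies of the tuple \<open>x\<close>, with \<open>tp(a)\<close> imposed
  on each copy. Saturation, extended from one variable to fewer than \<open>\<kappa>\<close> variables by a Zorn
  argument, realizes it, and strong homogeneity turns each realization of \<open>tp(a)\<close> into an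
  automorphism.
  For (ii) the same compactness argument runs with \<open>\<sigma>\<close> unknown as well: if no product for
  finitely many consequences is contained in \<open>A = {\<sigma>. \<psi>(\<sigma>(d), e)}\<close>, one also solves for
  \<open>\<sigma>\<inverse>(a)\<close> and \<open>\<sigma>\<inverse>(e)\<close> subject to \<open>\<not> \<psi>(d, \<sigma>\<inverse>(e))\<close>, and obtains an element of the full
  product outside \<open>A\<close>.\<close>

lemma eval_cong: "(\<forall>z\<in>fvt t. v z = v' z) \<Longrightarrow> eval S v t = eval S v' t"
proof (induction t)
  case (Var z) then show ?case by simp
next
  case (App f ts)
  have "map (eval S v) ts = map (eval S v') ts"
    using App by (auto simp: map_eq_conv)
  then show ?case by (metis eval.simps(2))
qed

lemma sat_cong: "(\<forall>z\<in>fv \<phi>. v z = v' z) \<Longrightarrow> sat L S v \<phi> = sat L S v' \<phi>"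
proof (induction \<phi> arbitrary: v v')
  case (FEq t u) then show ?case using eval_cong[of t v v' S] eval_cong[of u v v' S] by simp
next
  case (FRel r ts)
  have "map (eval S v) ts = map (eval S v') ts"
    using FRel by (auto simp: map_eq_conv intro!: eval_cong)
  then show ?case by (metis sat.simps(2))
next
  case (FNeg \<phi>) then show ?case by simp
next
  case (FConj \<phi> \<psi>)
  have "sat L S v \<phi> = sat L S v' \<phi>" using FConj.IH(1) FConj.prems by auto
  moreover have "sat L S v \<psi> = sat L S v' \<psi>" using FConj.IH(2) FConj.prems by auto
  ultimately show ?case by simp
next
  case (FEx z \<phi>)
  have "\<And>b. sat L S (v(z:=b)) \<phi> = sat L S (v'(z:=b)) \<phi>"
    using FEx by (intro FEx.IH) auto
  then show ?case by simp
qed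

definition asg_on :: "('s,'f,'r,'v) lang \<Rightarrow> ('s,'f,'r,'a) struc \<Rightarrow> 'v set \<Rightarrow> ('v \<Rightarrow> 'a) \<Rightarrow> bool" where
  "asg_on L M W v \<longleftrightarrow> (\<forall>z\<in>W. v z \<in> carr M \<and> esort M (v z) = vsort L z)"

lemma asg_on_subset: "asg_on L M W v \<Longrightarrow> W' \<subseteq> W \<Longrightarrow> asg_on L M W' v"
  unfolding asg_on_def by blast

lemma eval_wt:
  assumes "wf_struc L M" and "wt L t s" and "asg_on L M (fvt t) v"
  shows "eval M v t \<in> carr M \<and> esort M (eval M v t) = s"
  using assms(2,3)
proof (induction t s rule: wt.induct)
  case (1 z s) then show ?case by (auto simp: asg_on_def)
next
  case (2 f ss s ts)
  have h: "\<forall>i<length ts. eval M v (ts!i) \<in> carr M \<and> esort M (eval M v (ts!i)) = ss!i"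
  proof (intro allI impI)
    fix i assume i: "i < length ts"
    then have "ts!i \<in> set ts" by simp
    then have "asg_on L M (fvt (ts!i)) v" using 2(3) by (auto simp: asg_on_def)
    then show "eval M v (ts!i) \<in> carr M \<and> esort M (eval M v (ts!i)) = ss!i"
      using 2(2) i by (auto simp: list_all2_conv_all_nth)
  qed
  have l: "length ts = length ss" using 2(2) by (simp add: list_all2_conv_all_nth)
  have "set (map (eval M v) ts) \<subseteq> carr M" using h by (auto simp: in_set_conv_nth)
  moreover have "map (esort M) (map (eval M v) ts) = fst (fsig L f)"
    using h l 2(1) by (auto simp: list_eq_iff_nth_eq)
  ultimately show ?case using assms(1) 2(1) unfolding wf_struc_def by auto
qed

lemma eval_args_wt:
  assumes "wf_struc L M" and "list_all2 (wt L) ts ss" and "\<forall>t\<in>set ts. asg_on L M (fvt t) v"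
  shows "set (map (eval M v) ts) \<subseteq> carr M \<and> map (esort M) (map (eval M v) ts) = ss"
proof -
  have h: "\<forall>i<length ts. eval M v (ts!i) \<in> carr M \<and> esort M (eval M v (ts!i)) = ss!i"
    using assms eval_wt by (fastforce simp: list_all2_conv_all_nth)
  have l: "length ts = length ss" using assms(2) by (simp add: list_all2_conv_all_nth)
  show ?thesis using h l by (auto simp: list_eq_iff_nth_eq in_set_conv_nth)
qed

lemma AutD:
  assumes "\<sigma> \<in> Aut L M"
  shows "bij_betw \<sigma> (carr M) (carr M)" "\<And>z. z \<notin> carr M \<Longrightarrow> \<sigma> z = z"
    "\<And>b. b \<in> carr M \<Longrightarrow> esort M (\<sigma> b) = esort M b"
    "\<And>f args. set args \<subseteq> carr M \<Longrightarrow> map (esort M) args = fst (fsig L f) \<Longrightarrow>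
         \<sigma> (funs M f args) = funs M f (map \<sigma> args)"
    "\<And>r args. set args \<subseteq> carr M \<Longrightarrow> map (esort M) args = rsig L r \<Longrightarrow>
         (rels M r (map \<sigma> args) \<longleftrightarrow> rels M r args)"
  using assms unfolding Aut_def by auto

lemma eval_Aut:
  assumes "\<sigma> \<in> Aut L M" and "wf_struc L M" and "wt L t s" and "asg_on L M (fvt t) v"
  shows "eval M (\<sigma> \<circ> v) t = \<sigma> (eval M v t)"
  using assms(3,4)
proof (induction t s rule: wt.induct)
  case (1 z s) then show ?case by simp
next
  case (2 f ss s ts)
  have la: "list_all2 (wt L) ts ss" using 2(2) by (auto simp: list_all2_conv_all_nth)
  have ok: "\<forall>t\<in>set ts. asg_on L M (fvt t) v" using 2(3) by (auto simp: asg_on_def)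
  have e: "map (eval M (\<sigma> \<circ> v)) ts = map \<sigma> (map (eval M v) ts)"
  proof (rule nth_equalityI)
    fix i assume i: "i < length (map (eval M (\<sigma> \<circ> v)) ts)"
    then have "ts!i \<in> set ts" by simp
    then have "asg_on L M (fvt (ts!i)) v" using ok by auto
    then show "map (eval M (\<sigma> \<circ> v)) ts ! i = map \<sigma> (map (eval M v) ts) ! i"
      using 2(2) i by (auto simp: list_all2_conv_all_nth comp_def)
  qed simp
  have "set (map (eval M v) ts) \<subseteq> carr M \<and> map (esort M) (map (eval M v) ts) = ss"
    using eval_args_wt[OF assms(2) la ok] .
  then have "\<sigma> (funs M f (map (eval M v) ts)) = funs M f (map \<sigma> (map (eval M v) ts))"
    using AutD(4)[OF assms(1), of "map (eval M v) ts" f] 2(1) by simp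
  then show ?case by (simp only: eval.simps e)
qed

lemma sat_Aut:
  assumes "\<sigma> \<in> Aut L M" and "wf_struc L M" and "wf_fm L \<phi>" and "asg_on L M (fv \<phi>) v"
  shows "sat L M (\<sigma> \<circ> v) \<phi> = sat L M v \<phi>"
  using assms(3,4)
proof (induction \<phi> arbitrary: v)
  case (FEq t u)
  then obtain s where s: "wt L t s" "wt L u s" by auto
  have okt: "asg_on L M (fvt t) v" "asg_on L M (fvt u) v" using FEq by (auto simp: asg_on_def)
  have "eval M v t \<in> carr M" "eval M v u \<in> carr M"
    using eval_wt[OF assms(2) s(1) okt(1)] eval_wt[OF assms(2) s(2) okt(2)] by auto
  moreover have "inj_on \<sigma> (carr M)" using AutD(1)[OF assms(1)] bij_betw_def by blast
  ultimately show ?case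
    using eval_Aut[OF assms(1,2) s(1) okt(1)] eval_Aut[OF assms(1,2) s(2) okt(2)]
    by (simp del: comp_apply) (metis inj_onD)
next
  case (FRel r ts)
  have la: "list_all2 (wt L) ts (rsig L r)" using FRel by simp
  have ok: "\<forall>t\<in>set ts. asg_on L M (fvt t) v" using FRel(2) by (auto simp: asg_on_def)
  have e: "map (eval M (\<sigma> \<circ> v)) ts = map \<sigma> (map (eval M v) ts)"
  proof (rule nth_equalityI)
    fix i assume i: "i < length (map (eval M (\<sigma> \<circ> v)) ts)"
    then have "ts!i \<in> set ts" by simp
    then have "asg_on L M (fvt (ts!i)) v" using ok by auto
    then show "map (eval M (\<sigma> \<circ> v)) ts ! i = map \<sigma> (map (eval M v) ts) ! i"
      using la i eval_Aut[OF assms(1,2)] by (auto simp: list_all2_conv_all_nth)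
  qed simp
  have "set (map (eval M v) ts) \<subseteq> carr M \<and> map (esort M) (map (eval M v) ts) = rsig L r"
    using eval_args_wt[OF assms(2) la ok] .
  then have "rels M r (map \<sigma> (map (eval M v) ts)) = rels M r (map (eval M v) ts)"
    using AutD(5)[OF assms(1), of "map (eval M v) ts" r] by blast
  then show ?case by (simp only: sat.simps e)
next
  case (FNeg \<phi>) then show ?case by simp
next
  case (FConj \<phi> \<psi>)
  have "sat L M (\<sigma> \<circ> v) \<phi> = sat L M v \<phi>" using FConj.IH(1) FConj.prems by (auto simp: asg_on_def comp_def)
  moreover have "sat L M (\<sigma> \<circ> v) \<psi> = sat L M v \<psi>" using FConj.IH(2) FConj.prems by (auto simp: asg_on_def comp_def)
  ultimately show ?case by (simp add: comp_def)
next
  case (FEx z \<phi>)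
  have bij: "bij_betw \<sigma> (carr M) (carr M)" using AutD(1)[OF assms(1)] .
  have IH: "\<And>b. b \<in> carr M \<Longrightarrow> esort M b = vsort L z \<Longrightarrow>
      sat L M (\<sigma> \<circ> (v(z:=b))) \<phi> = sat L M (v(z:=b)) \<phi>"
    using FEx by (intro FEx.IH) (auto simp: asg_on_def)
  have c: "\<And>b. \<sigma> \<circ> (v(z:=b)) = (\<sigma> \<circ> v)(z := \<sigma> b)" by auto
  show ?case
  proof
    assume "sat L M (\<sigma> \<circ> v) (FEx z \<phi>)"
    then obtain b where b: "b \<in> carr M" "esort M b = vsort L z" "sat L M ((\<sigma> \<circ> v)(z:=b)) \<phi>" by auto
    define b' where "b' = inv_into (carr M) \<sigma> b"
    have b': "b' \<in> carr M" "\<sigma> b' = b" using bij b unfolding b'_def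
      by (auto simp: bij_betw_def inv_into_into f_inv_into_f)
    have "esort M b' = vsort L z" using AutD(3)[OF assms(1) b'(1)] b' b by simp
    then show "sat L M v (FEx z \<phi>)" using IH[of b'] b b' c by auto
  next
    assume "sat L M v (FEx z \<phi>)"
    then obtain b where b: "b \<in> carr M" "esort M b = vsort L z" "sat L M (v(z:=b)) \<phi>" by auto
    have "\<sigma> b \<in> carr M" using bij b by (auto simp: bij_betw_def)
    moreover have "esort M (\<sigma> b) = vsort L z" using AutD(3)[OF assms(1) b(1)] b by simp
    ultimately show "sat L M (\<sigma> \<circ> v) (FEx z \<phi>)" using IH[of b] b c by force
  qed
qed

definition default_asg :: "('s,'f,'r,'v) lang \<Rightarrow> ('s,'f,'r,'a) struc \<Rightarrow> 'v \<Rightarrow> 'a" where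
  "default_asg L M z = (SOME b. b \<in> carr M \<and> esort M b = vsort L z)"

lemma asg_on_default_asg: "wf_struc L M \<Longrightarrow> asg_on L M W (default_asg L M)"
  unfolding wf_struc_def asg_on_def default_asg_def by (metis (mono_tags, lifting) someI_ex)

lemma id_Aut: "id \<in> Aut L M"
  unfolding Aut_def by (auto simp: map_idI)

lemma comp_Aut: "f \<in> Aut L M \<Longrightarrow> g \<in> Aut L M \<Longrightarrow> f \<circ> g \<in> Aut L M"
proof -
  assume f: "f \<in> Aut L M" and g: "g \<in> Aut L M"
  have b: "bij_betw (f \<circ> g) (carr M) (carr M)"
    using AutD(1)[OF f] AutD(1)[OF g] bij_betw_trans by blast
  have gc: "\<And>b. b \<in> carr M \<Longrightarrow> g b \<in> carr M" using AutD(1)[OF g] by (auto simp: bij_betw_def)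
  show ?thesis unfolding Aut_def
  proof (intro CollectI conjI allI impI ballI)
    show "bij_betw (f \<circ> g) (carr M) (carr M)" by (rule b)
    show "\<And>z. z \<notin> carr M \<Longrightarrow> (f \<circ> g) z = z" using AutD(2)[OF f] AutD(2)[OF g] by simp
    show "\<And>b. b \<in> carr M \<Longrightarrow> esort M ((f \<circ> g) b) = esort M b"
      using AutD(3)[OF f] AutD(3)[OF g] gc by simp
  next
    fix h args assume a: "set args \<subseteq> carr M \<and> map (esort M) args = fst (fsig L h)"
    have me: "map (esort M) (map g args) = map (esort M) args"
      unfolding map_map by (rule map_cong) (use a AutD(3)[OF g] in auto)
    have a2: "set (map g args) \<subseteq> carr M" "map (esort M) (map g args) = fst (fsig L h)"
      using a gc me by auto
    show "(f \<circ> g) (funs M h args) = funs M h (map (f \<circ> g) args)"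
      using AutD(4)[OF g, of args h] AutD(4)[OF f a2] a by simp
  next
    fix r args assume a: "set args \<subseteq> carr M \<and> map (esort M) args = rsig L r"
    have me: "map (esort M) (map g args) = map (esort M) args"
      unfolding map_map by (rule map_cong) (use a AutD(3)[OF g] in auto)
    have a2: "set (map g args) \<subseteq> carr M" "map (esort M) (map g args) = rsig L r"
      using a gc me by auto
    show "rels M r (map (f \<circ> g) args) = rels M r args"
      using AutD(5)[OF g, of args r] AutD(5)[OF f a2] a by simp
  qed
qed

lemma ginv_in_carr: "f \<in> Aut L M \<Longrightarrow> b \<in> carr M \<Longrightarrow> ginv M f b \<in> carr M \<and> f (ginv M f b) = b"
proof -
  assume f: "f \<in> Aut L M" and b: "b \<in> carr M"
  have "inj_on f (carr M)" "f ` carr M = carr M" using AutD(1)[OF f] by (auto simp: bij_betw_def)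
  then show ?thesis using b unfolding ginv_def by (auto intro: inv_into_into f_inv_into_f)
qed

lemma ginv_left_apply: "f \<in> Aut L M \<Longrightarrow> ginv M f (f z) = z"
proof -
  assume f: "f \<in> Aut L M"
  show ?thesis
  proof (cases "z \<in> carr M")
    case True
    then have "f z \<in> carr M" using AutD(1)[OF f] by (auto simp: bij_betw_def)
    then show ?thesis using True AutD(1)[OF f] unfolding ginv_def
      by (auto simp: bij_betw_def inv_into_f_f)
  next
    case False then show ?thesis using AutD(2)[OF f] unfolding ginv_def by simp
  qed
qed

lemma ginv_right_apply: "f \<in> Aut L M \<Longrightarrow> f (ginv M f z) = z"
proof -
  assume f: "f \<in> Aut L M"
  show ?thesis
  proof (cases "z \<in> carr M")
    case True then show ?thesis using ginv_in_carr[OF f] by blast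
  next
    case False then show ?thesis using AutD(2)[OF f] unfolding ginv_def by simp
  qed
qed

lemma ginv_left: "f \<in> Aut L M \<Longrightarrow> ginv M f \<circ> f = id"
  using ginv_left_apply by fastforce

lemma ginv_right: "f \<in> Aut L M \<Longrightarrow> f \<circ> ginv M f = id"
  using ginv_right_apply by fastforce

lemma ginv_Aut:
  assumes f: "f \<in> Aut L M"
  shows "ginv M f \<in> Aut L M"
proof -
  have gc: "\<And>b. b \<in> carr M \<Longrightarrow> ginv M f b \<in> carr M" using ginv_in_carr[OF f] by blast
  have gs: "\<And>b. b \<in> carr M \<Longrightarrow> esort M (ginv M f b) = esort M b"
    using ginv_in_carr[OF f] AutD(3)[OF f] by metis
  have b: "bij_betw (ginv M f) (carr M) (carr M)"
  proof -
    have "bij_betw (inv_into (carr M) f) (carr M) (carr M)"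
      using AutD(1)[OF f] bij_betw_inv_into by blast
    then show ?thesis unfolding ginv_def by (rule bij_betw_cong[THEN iffD1, rotated]) auto
  qed
  show ?thesis unfolding Aut_def
  proof (intro CollectI conjI allI impI ballI)
    show "bij_betw (ginv M f) (carr M) (carr M)" by (rule b)
    show "\<And>z. z \<notin> carr M \<Longrightarrow> ginv M f z = z" unfolding ginv_def by simp
    show "\<And>b. b \<in> carr M \<Longrightarrow> esort M (ginv M f b) = esort M b" by (rule gs)
  next
    fix h args assume a: "set args \<subseteq> carr M \<and> map (esort M) args = fst (fsig L h)"
    have me: "map (esort M) (map (ginv M f) args) = map (esort M) args"
      unfolding map_map by (rule map_cong) (use a gs in auto)
    have a2: "set (map (ginv M f) args) \<subseteq> carr M" "map (esort M) (map (ginv M f) args) = fst (fsig L h)"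
      using a gc me by auto
    have m: "map f (map (ginv M f) args) = args" using ginv_right_apply[OF f] by (simp add: map_idI)
    have "f (funs M h (map (ginv M f) args)) = funs M h args"
      using AutD(4)[OF f a2] m by simp
    then show "ginv M f (funs M h args) = funs M h (map (ginv M f) args)"
      using ginv_left_apply[OF f] by metis
  next
    fix r args assume a: "set args \<subseteq> carr M \<and> map (esort M) args = rsig L r"
    have me: "map (esort M) (map (ginv M f) args) = map (esort M) args"
      unfolding map_map by (rule map_cong) (use a gs in auto)
    have a2: "set (map (ginv M f) args) \<subseteq> carr M" "map (esort M) (map (ginv M f) args) = rsig L r"
      using a gc me by auto
    have m: "map f (map (ginv M f) args) = args" using ginv_right_apply[OF f] by (simp add: map_idI)
    show "rels M r (map (ginv M f) args) = rels M r args"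
      using AutD(5)[OF f a2] m by simp
  qed
qed

lemma ginv_unique: "f \<in> Aut L M \<Longrightarrow> f \<circ> g = id \<Longrightarrow> ginv M f = g"
proof -
  assume f: "f \<in> Aut L M" and fg: "f \<circ> g = id"
  have "ginv M f = ginv M f \<circ> (f \<circ> g)" using fg by simp
  also have "\<dots> = (ginv M f \<circ> f) \<circ> g" by (simp add: comp_assoc)
  also have "\<dots> = g" using ginv_left[OF f] by simp
  finally show ?thesis .
qed

lemma ginv_comp: "f \<in> Aut L M \<Longrightarrow> g \<in> Aut L M \<Longrightarrow> ginv M (f \<circ> g) = ginv M g \<circ> ginv M f"
proof -
  assume f: "f \<in> Aut L M" and g: "g \<in> Aut L M"
  have "(f \<circ> g) \<circ> (ginv M g \<circ> ginv M f) = f \<circ> (g \<circ> ginv M g) \<circ> ginv M f" by (simp add: comp_assoc)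
  also have "\<dots> = id" using ginv_right[OF f] ginv_right[OF g] by simp
  finally show ?thesis using ginv_unique comp_Aut[OF f g] by blast
qed

lemma ginv_ginv: "f \<in> Aut L M \<Longrightarrow> ginv M (ginv M f) = f"
  using ginv_unique[OF ginv_Aut] ginv_left by blast

lemma ginv_id: "ginv M id = id"
  using ginv_unique[OF id_Aut] by (metis comp_id)

section \<open>Products of sets of automorphisms\<close>

definition gpow :: "('s,'f,'r,'a) struc \<Rightarrow> ('a \<Rightarrow> 'a) \<Rightarrow> int \<Rightarrow> ('a \<Rightarrow> 'a)" where
  "gpow M \<tau> e = (if e = 1 then \<tau> else ginv M \<tau>)"

fun gprod :: "('s,'f,'r,'a) struc \<Rightarrow> (nat \<Rightarrow> 'a \<Rightarrow> 'a) \<Rightarrow> (nat \<Rightarrow> int) \<Rightarrow> nat \<Rightarrow> ('a \<Rightarrow> 'a)" where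
  "gprod M \<tau> e 0 = id"
| "gprod M \<tau> e (Suc k) = gprod M \<tau> e k \<circ> gpow M (\<tau> k) (e k)"

lemma gprod_cong: "\<forall>k<n. \<tau> k = \<tau>' k \<Longrightarrow> gprod M \<tau> e n = gprod M \<tau>' e n"
  by (induction n) auto

lemma gpow_Aut: "t \<in> Aut L M \<Longrightarrow> gpow M t e \<in> Aut L M"
  unfolding gpow_def using ginv_Aut by auto

lemma gprod_Aut: "\<forall>k<n. \<tau> k \<in> Aut L M \<Longrightarrow> gprod M \<tau> e n \<in> Aut L M"
  by (induction n) (auto intro: comp_Aut gpow_Aut id_Aut)

lemma setpow_eq_image_gpow: "setpow M X e = (\<lambda>t. gpow M t e) ` X"
  unfolding setpow_def gpow_def by auto

lemma setprods_iff_gprod: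
  "\<sigma> \<in> setprods M X e n \<longleftrightarrow> (\<exists>\<tau>. (\<forall>k<n. \<tau> k \<in> X k) \<and> \<sigma> = gprod M \<tau> e n)"
proof (induction n arbitrary: \<sigma>)
  case 0 then show ?case by (simp add: id_def)
next
  case (Suc n)
  show ?case
  proof
    assume "\<sigma> \<in> setprods M X e (Suc n)"
    then obtain s t where st: "\<sigma> = s \<circ> t" "s \<in> setprods M X e n" "t \<in> setpow M (X n) (e n)"
      by (auto simp: setmul_def)
    obtain \<tau> where \<tau>: "\<forall>k<n. \<tau> k \<in> X k" "s = gprod M \<tau> e n" using Suc st(2) by blast
    obtain t0 where t0: "t0 \<in> X n" "t = gpow M t0 (e n)" using st(3) by (auto simp: setpow_eq_image_gpow)
    define \<tau>' where "\<tau>' = \<tau>(n := t0)"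
    have "gprod M \<tau>' e n = gprod M \<tau> e n" by (rule gprod_cong) (simp add: \<tau>'_def)
    then have "\<sigma> = gprod M \<tau>' e (Suc n)" using st \<tau> t0 by (simp add: \<tau>'_def)
    moreover have "\<forall>k<Suc n. \<tau>' k \<in> X k" using \<tau> t0 by (simp add: \<tau>'_def less_Suc_eq)
    ultimately show "\<exists>\<tau>. (\<forall>k<Suc n. \<tau> k \<in> X k) \<and> \<sigma> = gprod M \<tau> e (Suc n)" by blast
  next
    assume "\<exists>\<tau>. (\<forall>k<Suc n. \<tau> k \<in> X k) \<and> \<sigma> = gprod M \<tau> e (Suc n)"
    then obtain \<tau> where \<tau>: "\<forall>k<Suc n. \<tau> k \<in> X k" "\<sigma> = gprod M \<tau> e (Suc n)" by blast
    have "gprod M \<tau> e n \<in> setprods M X e n" using Suc.IH \<tau>(1) by (auto simp: less_Suc_eq)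
    moreover have "gpow M (\<tau> n) (e n) \<in> setpow M (X n) (e n)" using \<tau> by (auto simp: setpow_eq_image_gpow)
    ultimately show "\<sigma> \<in> setprods M X e (Suc n)" using \<tau> by (auto simp: setmul_def)
  qed
qed

lemma setprods_mono: "\<forall>k<n. X k \<subseteq> Y k \<Longrightarrow> setprods M X e n \<subseteq> setprods M Y e n"
  unfolding subset_iff setprods_iff_gprod by blast

definition pair_asg :: "('i \<Rightarrow> 'v) \<Rightarrow> ('i \<Rightarrow> 'v) \<Rightarrow> ('i \<Rightarrow> 'a) \<Rightarrow> ('i \<Rightarrow> 'a) \<Rightarrow> 'v \<Rightarrow> 'a" where
  "pair_asg x y c c' = (\<lambda>z. if z \<in> range x then c (inv x z) else if z \<in> range y then c' (inv y z) else undefined)"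

lemma tup_asg_eq_pair_asg: "tup_asg x y \<sigma> a = pair_asg x y (\<sigma> \<circ> a) a"
  unfolding tup_asg_def pair_asg_def by auto

definition sorted_tuple :: "('s,'f,'r,'v) lang \<Rightarrow> ('s,'f,'r,'a) struc \<Rightarrow> ('i \<Rightarrow> 'v) \<Rightarrow> ('i \<Rightarrow> 'a) \<Rightarrow> bool" where
  "sorted_tuple L M x c \<longleftrightarrow> (\<forall>i. c i \<in> carr M \<and> esort M (c i) = vsort L (x i))"

lemma sorted_tuple_Aut: "h \<in> Aut L M \<Longrightarrow> sorted_tuple L M x c \<Longrightarrow> sorted_tuple L M x (h \<circ> c)"
  unfolding sorted_tuple_def using AutD(1,3)[of h L M] by (auto simp: bij_betw_def)

lemma asg_on_pair_asg:
  assumes "inj x" "inj y" "range x \<inter> range y = {}" "\<forall>i. vsort L (x i) = vsort L (y i)"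
    and "sorted_tuple L M x c" "sorted_tuple L M x c'" and "W \<subseteq> range x \<union> range y"
  shows "asg_on L M W (pair_asg x y c c')"
  using assms unfolding asg_on_def sorted_tuple_def pair_asg_def by auto

lemma sat_pair_asg_Aut:
  assumes "inj x" "inj y" "range x \<inter> range y = {}" "\<forall>i. vsort L (x i) = vsort L (y i)"
    and "sorted_tuple L M x c" "sorted_tuple L M x c'" and "fm_in L x y \<phi>"
    and "h \<in> Aut L M" "wf_struc L M"
  shows "sat L M (pair_asg x y (h \<circ> c) (h \<circ> c')) \<phi> = sat L M (pair_asg x y c c') \<phi>"
proof -
  have "sat L M (pair_asg x y (h \<circ> c) (h \<circ> c')) \<phi> = sat L M (h \<circ> pair_asg x y c c') \<phi>"
    by (rule sat_cong) (use assms(7) in \<open>auto simp: pair_asg_def fm_in_def\<close>)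
  also have "\<dots> = sat L M (pair_asg x y c c') \<phi>"
    using assms by (intro sat_Aut asg_on_pair_asg) (auto simp: fm_in_def)
  finally show ?thesis .
qed

definition sat_pow :: "('s,'f,'r,'v) lang \<Rightarrow> ('s,'f,'r,'a) struc \<Rightarrow> ('i \<Rightarrow> 'v) \<Rightarrow> ('i \<Rightarrow> 'v)
    \<Rightarrow> ('f,'r,'v) fm set \<Rightarrow> int \<Rightarrow> ('i \<Rightarrow> 'a) \<Rightarrow> ('i \<Rightarrow> 'a) \<Rightarrow> bool" where
  "sat_pow L M x y \<pi> e c c' \<longleftrightarrow> (if e = 1 then \<forall>\<phi>\<in>\<pi>. sat L M (pair_asg x y c c') \<phi>
                              else \<forall>\<phi>\<in>\<pi>. sat L M (pair_asg x y c' c) \<phi>)"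

lemma sat_pow_iff_singletons: "sat_pow L M x y \<pi> e c c' \<longleftrightarrow> (\<forall>\<phi>\<in>\<pi>. sat_pow L M x y {\<phi>} e c c')"
  by (simp add: sat_pow_def)

unbundle cardinal_syntax

lemma lepoll_iff_card_of: "A \<lesssim> B \<longleftrightarrow> |A| \<le>o |B|"
  unfolding lepoll_def using card_of_ordLeq by blast

lemma lesspoll_iff_not_lepoll: "A \<prec> B \<longleftrightarrow> \<not> B \<lesssim> A"
proof
  assume "A \<prec> B"
  then show "\<not> B \<lesssim> A" unfolding lesspoll_def using lepoll_antisym by blast
next
  assume n: "\<not> B \<lesssim> A"
  then have "|A| <o |B|" unfolding lepoll_iff_card_of using not_ordLeq_iff_ordLess
    by (metis card_of_Well_order)
  then have "A \<lesssim> B" unfolding lepoll_iff_card_of using ordLess_imp_ordLeq by blast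
  moreover have "\<not> A \<approx> B" using n eqpoll_sym eqpoll_imp_lepoll by blast
  ultimately show "A \<prec> B" unfolding lesspoll_def by blast
qed

lemma lesspoll_iff_card_of: "A \<prec> B \<longleftrightarrow> |A| <o |B|"
  unfolding lesspoll_iff_not_lepoll lepoll_iff_card_of
  by (metis card_of_Well_order not_ordLeq_iff_ordLess)

lemma Un_lesspoll: "infinite K \<Longrightarrow> A \<prec> K \<Longrightarrow> B \<prec> K \<Longrightarrow> A \<union> B \<prec> K"
  unfolding lesspoll_iff_card_of using card_of_Un_ordLess_infinite by blast

lemma finite_Un_lesspoll: "infinite K \<Longrightarrow> A \<prec> K \<Longrightarrow> finite B \<Longrightarrow> A \<union> B \<prec> K"
  using Un_lesspoll finite_lesspoll_infinite by blast

lemma UN_lesspoll: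
  assumes "infinite K" and "finite I" and "\<forall>i\<in>I. A i \<prec> K"
  shows "(\<Union>i\<in>I. A i) \<prec> K"
  using assms(2,3)
proof (induction I rule: finite_induct)
  case empty then show ?case using finite_lesspoll_infinite[OF assms(1), of "{}"] by simp
next
  case (insert i I) then show ?case by (simp add: Un_lesspoll[OF assms(1)])
qed

lemma lepoll_Diff_lesspoll: "infinite K \<Longrightarrow> S \<prec> K \<Longrightarrow> K \<lesssim> V \<Longrightarrow> K \<lesssim> V - S"
proof (rule ccontr)
  assume i: "infinite K" and s: "S \<prec> K" and kv: "K \<lesssim> V" and n: "\<not> K \<lesssim> V - S"
  then have "V - S \<prec> K" using lesspoll_iff_not_lepoll by blast
  then have "(V - S) \<union> S \<prec> K" using Un_lesspoll i s by blast
  then have "V \<prec> K" by (rule lesspoll_trans1[OF subset_imp_lepoll, rotated]) blast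
  then show False using kv lesspoll_iff_not_lepoll by blast
qed

lemma fresh_vars:
  fixes L :: "('s,'f,'r,'v) lang" and srt :: "'j \<Rightarrow> 's" and K :: "'k set"
  assumes inf: "infinite K" and sorts: "\<forall>s. K \<lesssim> {z. vsort L z = s}"
    and I: "I \<prec> K" and S: "S \<prec> K"
  shows "\<exists>u. inj_on u I \<and> (\<forall>j\<in>I. vsort L (u j) = srt j) \<and> u ` I \<inter> S = {}"
proof -
  have ex: "\<forall>s. \<exists>g. inj_on g {j\<in>I. srt j = s} \<and> g ` {j\<in>I. srt j = s} \<subseteq> {z. vsort L z = s} - S"
  proof
    fix s
    have "{j\<in>I. srt j = s} \<lesssim> I" by (rule subset_imp_lepoll) blast
    also have "I \<lesssim> K" using I by (rule lesspoll_imp_lepoll)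
    also have "K \<lesssim> {z. vsort L z = s} - S" using lepoll_Diff_lesspoll[OF inf S] sorts by blast
    finally show "\<exists>g. inj_on g {j\<in>I. srt j = s} \<and> g ` {j\<in>I. srt j = s} \<subseteq> {z. vsort L z = s} - S"
      unfolding lepoll_def .
  qed
  obtain g where g: "\<forall>s. inj_on (g s) {j\<in>I. srt j = s} \<and> g s ` {j\<in>I. srt j = s} \<subseteq> {z. vsort L z = s} - S"
    using choice[OF ex] by blast
  define u where "u j = g (srt j) j" for j
  have us: "\<forall>j\<in>I. vsort L (u j) = srt j" using g unfolding u_def by blast
  have "inj_on u I"
  proof (rule inj_onI)
    fix j j' assume j: "j \<in> I" "j' \<in> I" and e: "u j = u j'"
    then have "srt j = srt j'" using us by (metis j)
    then show "j = j'" using e j g unfolding u_def inj_on_def by auto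
  qed
  moreover have "u ` I \<inter> S = {}" using g unfolding u_def by blast
  ultimately show ?thesis using us by blast
qed

lemma finite_subset_UN_image:
  assumes "finite B" and "B \<subseteq> (\<Union>k<n. f k ` A k) \<union> C"
  shows "\<exists>F. (\<forall>k<n. F k \<subseteq> A k \<and> finite (F k)) \<and> B \<subseteq> (\<Union>k<n. f k ` F k) \<union> C"
proof -
  have ex: "\<forall>k. \<exists>F. F \<subseteq> A k \<and> finite F \<and> B \<inter> f k ` A k = f k ` F"
    using finite_subset_image[of "B \<inter> f k ` A k" "f k" "A k" for k] assms(1) by blast
  obtain F where F: "\<forall>k. F k \<subseteq> A k \<and> finite (F k) \<and> B \<inter> f k ` A k = f k ` F k"
    using choice[OF ex] by blast
  have "B \<subseteq> (\<Union>k<n. f k ` F k) \<union> C"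
  proof
    fix b assume b: "b \<in> B"
    then consider "b \<in> C" | k where "k < n" "b \<in> f k ` A k" using assms(2) by blast
    then show "b \<in> (\<Union>k<n. f k ` F k) \<union> C"
    proof cases
      case 2
      then have "b \<in> f k ` F k" using F b by blast
      then show ?thesis using 2(1) by blast
    qed simp
  qed
  moreover have "\<forall>k<n. F k \<subseteq> A k \<and> finite (F k)" using F by blast
  ultimately show ?thesis by (intro exI[of _ F] conjI)
qed

primrec vars :: "('f,'r,'v) fm \<Rightarrow> 'v set" where
  "vars (FEq t u) = fvt t \<union> fvt u"
| "vars (FRel r ts) = (\<Union>t\<in>set ts. fvt t)"
| "vars (FNeg \<phi>) = vars \<phi>"
| "vars (FConj \<phi> \<psi>) = vars \<phi> \<union> vars \<psi>"
| "vars (FEx z \<phi>) = insert z (vars \<phi>)"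

lemma finite_fvt: "finite (fvt t)"
proof (induction t)
  case (Var z) then show ?case by simp
next
  case (App f ts) then show ?case by simp
qed

lemma finite_vars: "finite (vars \<phi>)"
  by (induction \<phi>) (simp_all add: finite_fvt)

lemma fv_vars: "fv \<phi> \<subseteq> vars \<phi>"
  by (induction \<phi>) (simp_all, blast+)

lemma finite_fv: "finite (fv \<phi>)"
  by (rule finite_subset[OF fv_vars finite_vars])

primrec rename_trm :: "('v \<Rightarrow> 'v) \<Rightarrow> ('f,'v) trm \<Rightarrow> ('f,'v) trm" where
  "rename_trm \<rho> (Var z) = Var (\<rho> z)"
| "rename_trm \<rho> (App f ts) = App f (map (rename_trm \<rho>) ts)"

primrec rename_fm :: "('v \<Rightarrow> 'v) \<Rightarrow> ('f,'r,'v) fm \<Rightarrow> ('f,'r,'v) fm" where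
  "rename_fm \<rho> (FEq t u) = FEq (rename_trm \<rho> t) (rename_trm \<rho> u)"
| "rename_fm \<rho> (FRel r ts) = FRel r (map (rename_trm \<rho>) ts)"
| "rename_fm \<rho> (FNeg \<phi>) = FNeg (rename_fm \<rho> \<phi>)"
| "rename_fm \<rho> (FConj \<phi> \<psi>) = FConj (rename_fm \<rho> \<phi>) (rename_fm \<rho> \<psi>)"
| "rename_fm \<rho> (FEx z \<phi>) = FEx (\<rho> z) (rename_fm \<rho> \<phi>)"

lemma eval_rename_trm: "eval S v (rename_trm \<rho> t) = eval S (v \<circ> \<rho>) t"
proof (induction t)
  case (Var z) then show ?case by simp
next
  case (App f ts)
  have m: "map (eval S v \<circ> rename_trm \<rho>) ts = map (eval S (v \<circ> \<rho>)) ts"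
    using App by (auto simp: map_eq_conv comp_def)
  show ?case by (simp only: rename_trm.simps eval.simps map_map m)
qed

lemma fvt_rename_trm: "fvt (rename_trm \<rho> t) = \<rho> ` fvt t"
proof (induction t)
  case (Var z) then show ?case by simp
next
  case (App f ts) then show ?case by (simp add: image_UN)
qed

lemma wt_rename_trm: "wt L t s \<Longrightarrow> \<forall>z\<in>fvt t. vsort L (\<rho> z) = vsort L z \<Longrightarrow> wt L (rename_trm \<rho> t) s"
proof (induction t s rule: wt.induct)
  case (1 z s) then show ?case by (auto intro: wt.intros)
next
  case (2 f ss s ts)
  have "list_all2 (wt L) (map (rename_trm \<rho>) ts) ss"
    unfolding list_all2_conv_all_nth
  proof (intro conjI allI impI)
    show "length (map (rename_trm \<rho>) ts) = length ss" using 2(2) by (simp add: list_all2_conv_all_nth)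
    fix i assume i: "i < length (map (rename_trm \<rho>) ts)"
    then have "ts ! i \<in> set ts" by simp
    then have "\<forall>z\<in>fvt (ts!i). vsort L (\<rho> z) = vsort L z" using 2(3) by auto
    then show "wt L (map (rename_trm \<rho>) ts ! i) (ss ! i)" using 2(2) i by (auto simp: list_all2_conv_all_nth)
  qed
  then show ?case using 2(1) by (auto intro: wt.intros)
qed

lemma wf_rename_fm: "wf_fm L \<phi> \<Longrightarrow> \<forall>z\<in>vars \<phi>. vsort L (\<rho> z) = vsort L z \<Longrightarrow> wf_fm L (rename_fm \<rho> \<phi>)"
proof (induction \<phi>)
  case (FEq t u)
  then obtain s where "wt L t s" "wt L u s" by auto
  then show ?case using FEq by (auto intro!: wt_rename_trm)
next
  case (FRel r ts)
  then show ?case by (auto simp: list_all2_conv_all_nth intro!: wt_rename_trm)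
qed auto

lemma fv_rename_fm: "inj_on \<rho> (vars \<phi>) \<Longrightarrow> fv (rename_fm \<rho> \<phi>) = \<rho> ` fv \<phi>"
proof (induction \<phi>)
  case (FEx z \<phi>)
  then have i: "inj_on \<rho> (insert z (vars \<phi>))" by simp
  then have "fv (rename_fm \<rho> \<phi>) = \<rho> ` fv \<phi>" using FEx.IH inj_on_subset[OF _ subset_insertI] by blast
  moreover have "\<rho> ` (fv \<phi> - {z}) = \<rho> ` fv \<phi> - {\<rho> z}"
    using i fv_vars[of \<phi>] by (auto simp: inj_on_def)
  ultimately show ?case by simp
next
  case (FConj \<phi> \<psi>)
  have i1: "inj_on \<rho> (vars \<phi>)" "inj_on \<rho> (vars \<psi>)"
    using FConj.prems(1) inj_on_subset[OF _ Un_upper1] inj_on_subset[OF _ Un_upper2] by auto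
  then show ?case using FConj.IH by (simp add: image_Un)
qed (auto simp: fvt_rename_trm)

lemma sat_rename_fm:
  "inj_on \<rho> (vars \<phi>) \<Longrightarrow> \<forall>z\<in>vars \<phi>. vsort L (\<rho> z) = vsort L z \<Longrightarrow>
    sat L S v (rename_fm \<rho> \<phi>) = sat L S (v \<circ> \<rho>) \<phi>"
proof (induction \<phi> arbitrary: v)
  case (FEq t u) then show ?case by (simp add: eval_rename_trm comp_def)
next
  case (FRel r ts)
  have m: "map (eval S v \<circ> rename_trm \<rho>) ts = map (eval S (v \<circ> \<rho>)) ts"
    by (auto simp: map_eq_conv eval_rename_trm)
  show ?case by (simp only: rename_fm.simps sat.simps map_map m)
next
  case (FNeg \<phi>) then show ?case by simp
next
  case (FConj \<phi> \<psi>)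
  have i1: "inj_on \<rho> (vars \<phi>)" "inj_on \<rho> (vars \<psi>)"
    using FConj.prems(1) inj_on_subset[OF _ Un_upper1] inj_on_subset[OF _ Un_upper2] by auto
  have "sat L S v (rename_fm \<rho> \<phi>) = sat L S (v \<circ> \<rho>) \<phi>" using FConj.IH(1)[OF i1(1)] FConj.prems(2) by (simp add: comp_def)
  moreover have "sat L S v (rename_fm \<rho> \<psi>) = sat L S (v \<circ> \<rho>) \<psi>" using FConj.IH(2)[OF i1(2)] FConj.prems(2) by (simp add: comp_def)
  ultimately show ?case by (simp add: comp_def)
next
  case (FEx z \<phi>)
  have i: "inj_on \<rho> (insert z (vars \<phi>))" using FEx by simp
  have i1: "inj_on \<rho> (vars \<phi>)" using i inj_on_subset[OF _ subset_insertI] by blast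
  have "\<And>b. sat L S (v(\<rho> z := b)) (rename_fm \<rho> \<phi>) = sat L S ((v(\<rho> z := b)) \<circ> \<rho>) \<phi>"
    using FEx.IH[OF i1] FEx.prems(2) by (simp add: comp_def)
  moreover have "\<And>b. sat L S ((v(\<rho> z := b)) \<circ> \<rho>) \<phi> = sat L S ((v \<circ> \<rho>)(z := b)) \<phi>"
  proof (rule sat_cong, intro ballI)
    fix b w assume w: "w \<in> fv \<phi>"
    then have "w \<in> vars \<phi>" using fv_vars[of \<phi>] by (rule subsetD[rotated])
    then show "((v(\<rho> z := b)) \<circ> \<rho>) w = ((v \<circ> \<rho>)(z := b)) w"
      using i by (cases "w = z") (auto simp: inj_on_def)
  qed
  moreover have "vsort L (\<rho> z) = vsort L z" using FEx by simp
  ultimately show ?case by (simp add: comp_def)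
qed

definition ftrue :: "('f,'r,'v) fm" where
  "ftrue = FEx undefined (FEq (Var undefined) (Var undefined))"

definition fconj_set :: "('f,'r,'v) fm set \<Rightarrow> ('f,'r,'v) fm" where
  "fconj_set \<Phi> = foldr FConj (SOME \<phi>s. set \<phi>s = \<Phi>) ftrue"

definition fex_set :: "'v set \<Rightarrow> ('f,'r,'v) fm \<Rightarrow> ('f,'r,'v) fm" where
  "fex_set Z \<phi> = foldr FEx (SOME zs. set zs = Z) \<phi>"

lemma set_some_list: "finite A \<Longrightarrow> set (SOME xs. set xs = A) = A"
  by (rule someI_ex[OF finite_list])

lemma fv_fconj_set:
  assumes "finite \<Phi>"
  shows "fv (fconj_set \<Phi>) = (\<Union>\<phi>\<in>\<Phi>. fv \<phi>)"
proof -
  have "fv (foldr FConj \<phi>s ftrue) = (\<Union>\<phi>\<in>set \<phi>s. fv \<phi>)" for \<phi>s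
    by (induction \<phi>s) (auto simp: ftrue_def)
  from this[of "SOME \<phi>s. set \<phi>s = \<Phi>"] show ?thesis
    by (simp add: fconj_set_def set_some_list[OF assms])
qed

lemma wf_fconj_set:
  assumes "finite \<Phi>"
  shows "wf_fm L (fconj_set \<Phi>) \<longleftrightarrow> (\<forall>\<phi>\<in>\<Phi>. wf_fm L \<phi>)"
proof -
  have "wf_fm L (foldr FConj \<phi>s ftrue) \<longleftrightarrow> (\<forall>\<phi>\<in>set \<phi>s. wf_fm L \<phi>)" for \<phi>s
    by (induction \<phi>s) (auto simp: ftrue_def intro: wt.intros)
  from this[of "SOME \<phi>s. set \<phi>s = \<Phi>"] show ?thesis
    by (simp add: fconj_set_def set_some_list[OF assms])
qed

lemma sat_fconj_set:
  assumes "wf_struc L S" and "finite \<Phi>"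
  shows "sat L S v (fconj_set \<Phi>) \<longleftrightarrow> (\<forall>\<phi>\<in>\<Phi>. sat L S v \<phi>)"
proof -
  have "sat L S v (foldr FConj \<phi>s ftrue) \<longleftrightarrow> (\<forall>\<phi>\<in>set \<phi>s. sat L S v \<phi>)" for \<phi>s
    using assms(1) by (induction \<phi>s) (auto simp: ftrue_def wf_struc_def)
  from this[of "SOME \<phi>s. set \<phi>s = \<Phi>"] show ?thesis
    by (simp add: fconj_set_def set_some_list[OF assms(2)])
qed

lemma fv_fex_set:
  assumes "finite Z"
  shows "fv (fex_set Z \<phi>) = fv \<phi> - Z"
proof -
  have "fv (foldr FEx zs \<phi>) = fv \<phi> - set zs" for zs by (induction zs) auto
  then show ?thesis by (simp add: fex_set_def set_some_list[OF assms])
qed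

lemma wf_fex_set: "wf_fm L (fex_set Z \<phi>) = wf_fm L \<phi>"
proof -
  have "wf_fm L (foldr FEx zs \<phi>) = wf_fm L \<phi>" for zs by (induction zs) auto
  then show ?thesis unfolding fex_set_def by blast
qed

lemma sat_foldr_FEx:
  "sat L S v (foldr FEx zs \<phi>) \<longleftrightarrow>
     (\<exists>v'. (\<forall>w. w \<notin> set zs \<longrightarrow> v' w = v w) \<and> asg_on L S (set zs) v' \<and> sat L S v' \<phi>)"
proof (induction zs arbitrary: v)
  case Nil
  show ?case by (auto simp: asg_on_def fun_eq_iff[symmetric])
next
  case (Cons z zs)
  show ?case
  proof
    assume "sat L S v (foldr FEx (z # zs) \<phi>)"
    then obtain b where b: "b \<in> carr S" "esort S b = vsort L z" "sat L S (v(z:=b)) (foldr FEx zs \<phi>)"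
      by auto
    then obtain v' where v': "\<forall>w. w \<notin> set zs \<longrightarrow> v' w = (v(z:=b)) w" "asg_on L S (set zs) v'" "sat L S v' \<phi>"
      using Cons by blast
    have "asg_on L S (set (z # zs)) v'" using v' b unfolding asg_on_def by (cases "z \<in> set zs") auto
    moreover have "\<forall>w. w \<notin> set (z#zs) \<longrightarrow> v' w = v w" using v' by auto
    ultimately show "\<exists>v'. (\<forall>w. w \<notin> set (z#zs) \<longrightarrow> v' w = v w) \<and> asg_on L S (set (z#zs)) v' \<and> sat L S v' \<phi>"
      using v' by blast
  next
    assume "\<exists>v'. (\<forall>w. w \<notin> set (z#zs) \<longrightarrow> v' w = v w) \<and> asg_on L S (set (z#zs)) v' \<and> sat L S v' \<phi>"
    then obtain v' where v': "\<forall>w. w \<notin> set (z#zs) \<longrightarrow> v' w = v w" "asg_on L S (set (z#zs)) v'" "sat L S v' \<phi>"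
      by blast
    have "\<forall>w. w \<notin> set zs \<longrightarrow> v' w = (v(z := v' z)) w" using v' by auto
    moreover have "asg_on L S (set zs) v'" using v' by (auto simp: asg_on_def)
    ultimately have "sat L S (v(z := v' z)) (foldr FEx zs \<phi>)" using Cons v' by blast
    moreover have "v' z \<in> carr S" "esort S (v' z) = vsort L z" using v' by (auto simp: asg_on_def)
    ultimately show "sat L S v (foldr FEx (z # zs) \<phi>)" by auto
  qed
qed

lemma sat_fex_set:
  assumes "finite Z"
  shows "sat L S v (fex_set Z \<phi>) \<longleftrightarrow>
     (\<exists>v'. (\<forall>w. w \<notin> Z \<longrightarrow> v' w = v w) \<and> asg_on L S Z v' \<and> sat L S v' \<phi>)"
  unfolding fex_set_def sat_foldr_FEx set_some_list[OF assms] ..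

lemma fconj_set_entailed:
  assumes "F \<subseteq> \<pi>" and "finite F" and "\<forall>\<phi>\<in>\<pi>. fm_in L x y \<phi>"
  shows "fm_in L x y (fconj_set F) \<and> entails L T \<pi> (fconj_set F) TYPE('a)"
proof
  show "fm_in L x y (fconj_set F)"
    using assms unfolding fm_in_def by (auto simp: wf_fconj_set fv_fconj_set)
  show "entails L T \<pi> (fconj_set F) TYPE('a)"
    unfolding entails_def is_model_def using assms(1) sat_fconj_set[OF _ assms(2)] by blast
qed

section \<open>Realizing types in fewer than \<open>\<kappa>\<close> variables\<close>

definition solution :: "('s,'f,'r,'v) lang \<Rightarrow> ('s,'f,'r,'a) struc \<Rightarrow> 'v set \<Rightarrow> ('v \<Rightarrow> 'a)
    \<Rightarrow> ('f,'r,'v) fm set \<Rightarrow> ('v \<Rightarrow> 'a) \<Rightarrow> bool" where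
  "solution L M W e0 \<Phi> v \<longleftrightarrow>
     asg_on L M W v \<and> (\<forall>w. w \<notin> W \<longrightarrow> v w = e0 w) \<and> (\<forall>\<phi>\<in>\<Phi>. sat L M v \<phi>)"

lemma solution_mono: "solution L M W e0 \<Phi> v \<Longrightarrow> \<Phi>0 \<subseteq> \<Phi> \<Longrightarrow> solution L M W e0 \<Phi>0 v"
  unfolding solution_def by blast

definition finsat_extending :: "('s,'f,'r,'v) lang \<Rightarrow> ('s,'f,'r,'a) struc \<Rightarrow> 'v set \<Rightarrow> ('v \<Rightarrow> 'a)
    \<Rightarrow> ('f,'r,'v) fm set \<Rightarrow> ('v \<times> 'a) set \<Rightarrow> bool" where
  "finsat_extending L M W e0 \<Phi> G \<longleftrightarrow>
     (\<forall>\<Phi>0\<subseteq>\<Phi>. finite \<Phi>0 \<longrightarrow> (\<exists>v. solution L M W e0 \<Phi>0 v \<and> (\<forall>(w, b)\<in>G. v w = b)))"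

lemma finsat_extending_in_carr:
  assumes "finsat_extending L M W e0 \<Phi> G" and "(w, b) \<in> G" and "fst ` G \<subseteq> W"
  shows "b \<in> carr M \<and> esort M b = vsort L w"
proof -
  obtain v where "solution L M W e0 {} v" "\<forall>(w, b)\<in>G. v w = b"
    using assms(1) unfolding finsat_extending_def by blast
  moreover have "w \<in> W" using assms(2,3) by force
  ultimately show ?thesis using assms(2) unfolding solution_def asg_on_def by fastforce
qed

lemma single_valued_the:
  assumes "single_valued G" and "(w, b) \<in> G"
  shows "(THE b. (w, b) \<in> G) = b"
  using assms by (auto simp: single_valued_def)

definition graph_asg :: "('v \<times> 'a) set \<Rightarrow> ('v \<Rightarrow> 'a) \<Rightarrow> 'v \<Rightarrow> 'a" where
  "graph_asg G e0 w = (if w \<in> fst ` G then THE b. (w, b) \<in> G else e0 w)"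

lemma graph_asg_pair: "single_valued G \<Longrightarrow> (w, b) \<in> G \<Longrightarrow> graph_asg G e0 w = b"
  using single_valued_the[of G w b] unfolding graph_asg_def by force

lemma graph_asg_outside: "w \<notin> fst ` G \<Longrightarrow> graph_asg G e0 w = e0 w"
  unfolding graph_asg_def by simp

lemma solution_graph_asg:
  assumes v0: "solution L M W e0 \<Phi>0 v0" and G: "single_valued G" "fst ` G \<subseteq> W"
    and G_carr: "\<And>w b. (w, b) \<in> G \<Longrightarrow> b \<in> carr M \<and> esort M b = vsort L w"
    and agree: "\<And>w b. (w, b) \<in> G \<Longrightarrow> w \<in> (\<Union>\<phi>\<in>\<Phi>0. fv \<phi>) \<Longrightarrow> v0 w = b"
  shows "solution L M W e0 \<Phi>0 (graph_asg G v0)"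
proof -
  have "asg_on L M W (graph_asg G v0)"
    unfolding asg_on_def
  proof
    fix w assume "w \<in> W"
    show "graph_asg G v0 w \<in> carr M \<and> esort M (graph_asg G v0 w) = vsort L w"
    proof (cases "w \<in> fst ` G")
      case True
      then obtain b where "(w, b) \<in> G" by force
      then show ?thesis using G_carr graph_asg_pair[OF G(1)] by simp
    next
      case False
      then show ?thesis using v0 \<open>w \<in> W\<close> unfolding graph_asg_outside[OF False] solution_def asg_on_def by simp
    qed
  qed
  moreover have "graph_asg G v0 w = e0 w" if w: "w \<notin> W" for w
  proof -
    have "w \<notin> fst ` G" using w G(2) by blast
    then have "graph_asg G v0 w = v0 w" by (rule graph_asg_outside)
    then show ?thesis using v0 w unfolding solution_def by simp
  qed
  moreover have "sat L M (graph_asg G v0) \<phi>" if \<phi>: "\<phi> \<in> \<Phi>0" for \<phi>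
  proof -
    have "sat L M (graph_asg G v0) \<phi> = sat L M v0 \<phi>"
    proof (rule sat_cong, intro ballI)
      fix w assume w: "w \<in> fv \<phi>"
      show "graph_asg G v0 w = v0 w"
      proof (cases "w \<in> fst ` G")
        case True
        then obtain b where "(w, b) \<in> G" by force
        then show ?thesis using agree \<phi> w graph_asg_pair[OF G(1)] by blast
      qed (rule graph_asg_outside)
    qed
    then show ?thesis using v0 \<phi> unfolding solution_def by blast
  qed
  ultimately show ?thesis unfolding solution_def by blast
qed

lemma finsat_extending_Union_chain:
  assumes C: "subset.chain {G. fst ` G \<subseteq> W \<and> single_valued G \<and> finsat_extending L M W e0 \<Phi> G} C"
    and base: "finsat_extending L M W e0 \<Phi> {}"
  shows "\<Union>C \<in> {G. fst ` G \<subseteq> W \<and> single_valued G \<and> finsat_extending L M W e0 \<Phi> G}"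
proof (cases "C = {}")
  case True then show ?thesis using base by (simp add: single_valued_def)
next
  case False
  have CA: "fst ` G \<subseteq> W \<and> single_valued G \<and> finsat_extending L M W e0 \<Phi> G" if "G \<in> C" for G
    using C that unfolding subset_chain_def by blast
  have dom: "fst ` \<Union>C \<subseteq> W" using CA by blast
  have sv: "single_valued (\<Union>C)"
  proof (rule single_valuedI)
    fix w b b' assume "(w, b) \<in> \<Union>C" "(w, b') \<in> \<Union>C"
    then obtain G1 G2 where G: "G1 \<in> C" "G2 \<in> C" "(w, b) \<in> G1" "(w, b') \<in> G2" by blast
    have "G1 \<subseteq> G2 \<or> G2 \<subseteq> G1" using C G unfolding subset_chain_def by blast
    then show "b = b'" using G CA[of G1] CA[of G2] unfolding single_valued_def by blast
  qed
  have carr: "b \<in> carr M \<and> esort M b = vsort L w" if wb: "(w, b) \<in> \<Union>C" for w b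
  proof -
    obtain G where "G \<in> C" "(w, b) \<in> G" using wb by blast
    then show ?thesis using finsat_extending_in_carr[of L M W e0 \<Phi> G] CA by blast
  qed
  have "finsat_extending L M W e0 \<Phi> (\<Union>C)"
    unfolding finsat_extending_def
  proof (intro allI impI)
    fix \<Phi>0 assume \<Phi>0: "\<Phi>0 \<subseteq> \<Phi>" "finite \<Phi>0"
    define P where "P = {p \<in> \<Union>C. fst p \<in> (\<Union>\<phi>\<in>\<Phi>0. fv \<phi>)}"
    have "fst ` P \<subseteq> (\<Union>\<phi>\<in>\<Phi>0. fv \<phi>)" unfolding P_def by auto
    then have "finite (fst ` P)" using \<Phi>0(2) finite_fv by (meson finite_UN_I finite_subset)
    moreover have "inj_on fst P" using sv unfolding P_def single_valued_def inj_on_def by force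
    ultimately have "finite P" by (rule finite_imageD)
    then obtain G0 where G0: "G0 \<in> C" "P \<subseteq> G0"
      using finite_subset_Union_chain[OF _ _ False C] unfolding P_def by blast
    obtain v0 where v0: "solution L M W e0 \<Phi>0 v0" "\<forall>(w, b)\<in>G0. v0 w = b"
      using CA[OF G0(1)] \<Phi>0 unfolding finsat_extending_def by blast
    have agree: "v0 w = b" if "(w, b) \<in> \<Union>C" "w \<in> (\<Union>\<phi>\<in>\<Phi>0. fv \<phi>)" for w b
    proof -
      have "(w, b) \<in> P" using that unfolding P_def by simp
      then have "(w, b) \<in> G0" using G0(2) by blast
      then show ?thesis using v0(2) by auto
    qed
    have "solution L M W e0 \<Phi>0 (graph_asg (\<Union>C) v0)"
      using solution_graph_asg[OF v0(1) sv dom carr agree] by blast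
    moreover have "\<forall>(w, b)\<in>\<Union>C. graph_asg (\<Union>C) v0 w = b" using graph_asg_pair[OF sv] by auto
    ultimately show "\<exists>v. solution L M W e0 \<Phi>0 v \<and> (\<forall>(w, b)\<in>\<Union>C. v w = b)" by blast
  qed
  then show ?thesis using dom sv by blast
qed

lemma sat_fex_fconj_set:
  assumes "wf_struc L M" and "finite \<Phi>0" and "finite R"
    and "asg_on L M R v" and "\<forall>\<phi>\<in>\<Phi>0. sat L M v \<phi>" and "\<forall>w\<in>(\<Union>\<phi>\<in>\<Phi>0. fv \<phi>) - R. u w = v w"
  shows "sat L M u (fex_set R (fconj_set \<Phi>0))"
proof -
  define v' where "v' w = (if w \<in> R then v w else u w)" for w
  have "sat L M v' \<phi>" if "\<phi> \<in> \<Phi>0" for \<phi>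
  proof -
    have "sat L M v' \<phi> = sat L M v \<phi>"
      by (rule sat_cong) (use assms(6) that in \<open>auto simp: v'_def\<close>)
    then show ?thesis using assms(5) that by simp
  qed
  moreover have "asg_on L M R v'" using assms(4) unfolding asg_on_def v'_def by simp
  moreover have "\<forall>w. w \<notin> R \<longrightarrow> v' w = u w" unfolding v'_def by simp
  ultimately show ?thesis
    unfolding sat_fex_set[OF assms(3)] sat_fconj_set[OF assms(1,2)] by blast
qed

text \<open>The successor step of the Zorn argument below is where saturation enters: the value of
  one new unknown \<open>w0\<close> must satisfy all formulas \<open>step_fm W G w0 \<Phi>0\<close>, which quantify
  away the unknowns of \<open>\<Phi>0\<close> that are still unassigned; their parameters are the fewer
  than \<open>\<kappa>\<close> values of \<open>G\<close> and \<open>e0\<close>.\<close>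

definition step_fm :: "'v set \<Rightarrow> ('v \<times> 'a) set \<Rightarrow> 'v \<Rightarrow> ('f,'r,'v) fm set \<Rightarrow> ('f,'r,'v) fm" where
  "step_fm W G w0 \<Phi>0 = fex_set ((\<Union>\<phi>\<in>\<Phi>0. fv \<phi>) \<inter> (W - fst ` G - {w0})) (fconj_set \<Phi>0)"

lemma wf_fv_step_fm:
  assumes "finite \<Phi>0" and "\<forall>\<phi>\<in>\<Phi>0. wf_fm L \<phi>"
  shows "wf_fm L (step_fm W G w0 \<Phi>0)"
    and "fv (step_fm W G w0 \<Phi>0) - {w0} \<subseteq> fst ` G \<union> ((\<Union>\<phi>\<in>\<Phi>0. fv \<phi>) - W)"
proof -
  have "finite ((\<Union>\<phi>\<in>\<Phi>0. fv \<phi>) \<inter> (W - fst ` G - {w0}))" using assms(1) finite_fv by blast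
  then show "wf_fm L (step_fm W G w0 \<Phi>0)"
    "fv (step_fm W G w0 \<Phi>0) - {w0} \<subseteq> fst ` G \<union> ((\<Union>\<phi>\<in>\<Phi>0. fv \<phi>) - W)"
    using assms unfolding step_fm_def by (auto simp: wf_fex_set wf_fconj_set fv_fex_set fv_fconj_set)
qed

lemma sat_step_fm_of_solution:
  assumes wf: "wf_struc L M" and fin: "finite \<Phi>0" and v: "solution L M W e0 \<Phi>0 v"
    and G: "\<forall>(w, b)\<in>G. v w = b" "single_valued G"
  shows "sat L M ((graph_asg G e0)(w0 := v w0)) (step_fm W G w0 \<Phi>0)"
  unfolding step_fm_def
proof (rule sat_fex_fconj_set[OF wf fin])
  show "finite ((\<Union>\<phi>\<in>\<Phi>0. fv \<phi>) \<inter> (W - fst ` G - {w0}))" using fin finite_fv by blast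
  show "asg_on L M ((\<Union>\<phi>\<in>\<Phi>0. fv \<phi>) \<inter> (W - fst ` G - {w0})) v" "\<forall>\<phi>\<in>\<Phi>0. sat L M v \<phi>"
    using v unfolding solution_def asg_on_def by auto
  show "\<forall>w\<in>(\<Union>\<phi>\<in>\<Phi>0. fv \<phi>) - (\<Union>\<phi>\<in>\<Phi>0. fv \<phi>) \<inter> (W - fst ` G - {w0}).
      ((graph_asg G e0)(w0 := v w0)) w = v w"
  proof
    fix w assume "w \<in> (\<Union>\<phi>\<in>\<Phi>0. fv \<phi>) - (\<Union>\<phi>\<in>\<Phi>0. fv \<phi>) \<inter> (W - fst ` G - {w0})"
    then consider "w = w0" | "w \<in> fst ` G" "w \<noteq> w0" | "w \<notin> W" "w \<notin> fst ` G" "w \<noteq> w0" by blast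
    then show "((graph_asg G e0)(w0 := v w0)) w = v w"
    proof cases
      case 2
      then obtain b where "(w, b) \<in> G" by force
      then show ?thesis using 2 G graph_asg_pair[OF G(2)] by fastforce
    next
      case 3 then show ?thesis using v graph_asg_outside unfolding solution_def by simp
    qed simp
  qed
qed

lemma solution_of_sat_step_fm:
  assumes wf: "wf_struc L M" and G: "finsat_extending L M W e0 \<Phi> G" "fst ` G \<subseteq> W" "single_valued G"
    and w0: "w0 \<in> W" "w0 \<notin> fst ` G" and fin: "finite \<Phi>0"
    and b: "b \<in> carr M" "esort M b = vsort L w0"
    and sat: "sat L M ((graph_asg G e0)(w0 := b)) (step_fm W G w0 \<Phi>0)"
  shows "\<exists>v. solution L M W e0 \<Phi>0 v \<and> (\<forall>(w, c)\<in>insert (w0, b) G. v w = c)"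
proof -
  define R where "R = (\<Union>\<phi>\<in>\<Phi>0. fv \<phi>) \<inter> (W - fst ` G - {w0})"
  have "finite R" unfolding R_def using fin finite_fv by blast
  then obtain v where v: "\<forall>w. w \<notin> R \<longrightarrow> v w = ((graph_asg G e0)(w0 := b)) w" "asg_on L M R v"
      "\<forall>\<phi>\<in>\<Phi>0. sat L M v \<phi>"
    using sat unfolding step_fm_def R_def[symmetric] sat_fex_set[OF \<open>finite R\<close>] sat_fconj_set[OF wf fin]
    by blast
  obtain vany where vany: "asg_on L M W vany"
    using G(1) unfolding finsat_extending_def solution_def by blast
  define v' where "v' w = (if w \<in> W - fst ` G - {w0} - R then vany w else v w)" for w
  have v'_G: "v' w = c" if "(w, c) \<in> G" for w c
  proof -
    have "w \<in> fst ` G" "w \<noteq> w0" using that w0(2) by force+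
    then show ?thesis using that v(1) graph_asg_pair[OF G(3)] unfolding v'_def R_def by simp
  qed
  have v'_w0: "v' w0 = b" using v(1) unfolding v'_def R_def by simp
  have "asg_on L M W v'"
    unfolding asg_on_def
  proof
    fix w assume w: "w \<in> W"
    consider "w \<in> W - fst ` G - {w0} - R" | "w \<in> R" | "w = w0" | c where "(w, c) \<in> G"
      using w by force
    then show "v' w \<in> carr M \<and> esort M (v' w) = vsort L w"
    proof cases
      case 1 then show ?thesis using vany w unfolding v'_def asg_on_def by auto
    next
      case 2 then show ?thesis using v(2) unfolding v'_def asg_on_def R_def by auto
    next
      case 3 then show ?thesis using v'_w0 b by simp
    next
      case 4 then show ?thesis using v'_G finsat_extending_in_carr[OF G(1) _ G(2)] by fastforce
    qed
  qed
  moreover have "v' w = e0 w" if w: "w \<notin> W" for w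
  proof -
    have "w \<notin> R" "w \<noteq> w0" "w \<notin> fst ` G" using w G(2) w0(1) unfolding R_def by auto
    then show ?thesis using v(1) w graph_asg_outside unfolding v'_def by simp
  qed
  moreover have "sat L M v' \<phi>" if \<phi>: "\<phi> \<in> \<Phi>0" for \<phi>
  proof -
    have "sat L M v' \<phi> = sat L M v \<phi>"
      by (rule sat_cong) (use \<phi> in \<open>auto simp: v'_def R_def\<close>)
    then show ?thesis using v(3) \<phi> by simp
  qed
  moreover have "\<forall>(w, c)\<in>insert (w0, b) G. v' w = c" using v'_G v'_w0 by auto
  ultimately show ?thesis unfolding solution_def by blast
qed

lemma step_fm_params:
  fixes K :: "'k set"
  assumes inf: "infinite K" and small: "V \<prec> K" and WV: "W \<subseteq> V" and e0: "asg_on L M (V - W) e0"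
    and G: "finsat_extending L M W e0 \<Phi> G" "fst ` G \<subseteq> W" "single_valued G"
  shows "e0 ` (V - W) \<union> snd ` G \<subseteq> carr M" and "e0 ` (V - W) \<union> snd ` G \<prec> K"
proof -
  show "e0 ` (V - W) \<union> snd ` G \<subseteq> carr M"
    using e0 finsat_extending_in_carr[OF G(1) _ G(2)] unfolding asg_on_def by force
  have "e0 ` (V - W) \<prec> K"
    by (rule lesspoll_trans1[OF _ small]) (meson Diff_subset image_lepoll lepoll_trans subset_imp_lepoll)
  moreover have "snd ` G \<prec> K"
  proof -
    have "inj_on fst G" using G(3) unfolding single_valued_def inj_on_def by force
    then have "G \<lesssim> V" using G(2) WV unfolding lepoll_def by blast
    then show ?thesis using image_lepoll lepoll_trans lesspoll_trans1 small by blast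
  qed
  ultimately show "e0 ` (V - W) \<union> snd ` G \<prec> K" using Un_lesspoll[OF inf] by blast
qed

lemma step_fm_finsat:
  assumes wf: "wf_struc L M" and G: "finsat_extending L M W e0 \<Phi> G" "single_valued G"
    and w0: "w0 \<in> W" and \<FF>: "\<FF> \<subseteq> {\<Phi>0. \<Phi>0 \<subseteq> \<Phi> \<and> finite \<Phi>0}" "finite \<FF>"
  shows "\<exists>b\<in>carr M. esort M b = vsort L w0 \<and>
    (\<forall>\<Phi>0\<in>\<FF>. sat L M ((graph_asg G e0)(w0 := b)) (step_fm W G w0 \<Phi>0))"
proof -
  have "\<Union>\<FF> \<subseteq> \<Phi>" "finite (\<Union>\<FF>)" using \<FF> by auto
  then obtain v where v: "solution L M W e0 (\<Union>\<FF>) v" "\<forall>(w, b)\<in>G. v w = b"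
    using G(1) unfolding finsat_extending_def by blast
  have "sat L M ((graph_asg G e0)(w0 := v w0)) (step_fm W G w0 \<Phi>0)" if \<Phi>0: "\<Phi>0 \<in> \<FF>" for \<Phi>0
  proof -
    have "finite \<Phi>0" using \<Phi>0 \<FF>(1) by blast
    moreover have "solution L M W e0 \<Phi>0 v" using solution_mono[OF v(1)] \<Phi>0 by blast
    ultimately show ?thesis using sat_step_fm_of_solution[OF wf _ _ v(2) G(2)] by blast
  qed
  moreover have "v w0 \<in> carr M \<and> esort M (v w0) = vsort L w0"
    using v(1) w0 unfolding solution_def asg_on_def by blast
  ultimately show ?thesis by blast
qed

lemma finsat_extending_insert:
  fixes L :: "('s,'f,'r,'v) lang" and M :: "('s,'f,'r,'a) struc" and K :: "'k set"
    and \<Phi> :: "('f,'r,'v) fm set"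
  assumes satd: "saturated L M K" and wf: "wf_struc L M" and inf: "infinite K"
    and small: "V \<prec> K" and WV: "W \<subseteq> V" and fvs: "\<forall>\<phi>\<in>\<Phi>. wf_fm L \<phi> \<and> fv \<phi> \<subseteq> V"
    and e0: "asg_on L M (V - W) e0"
    and G: "finsat_extending L M W e0 \<Phi> G" "fst ` G \<subseteq> W" "single_valued G"
    and w0: "w0 \<in> W" "w0 \<notin> fst ` G"
  shows "\<exists>b. finsat_extending L M W e0 \<Phi> (insert (w0, b) G)"
proof -
  define \<Psi> where "\<Psi> = step_fm W G w0 ` {\<Phi>0. \<Phi>0 \<subseteq> \<Phi> \<and> finite \<Phi>0}"
  define B where "B = e0 ` (V - W) \<union> snd ` G"
  have \<Psi>_params: "wf_fm L \<psi> \<and> (\<forall>w\<in>fv \<psi> - {w0}. graph_asg G e0 w \<in> B \<and> esort M (graph_asg G e0 w) = vsort L w)"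
    if \<psi>: "\<psi> \<in> \<Psi>" for \<psi>
  proof -
    obtain \<Phi>0 where \<Phi>0: "\<psi> = step_fm W G w0 \<Phi>0" "\<Phi>0 \<subseteq> \<Phi>" "finite \<Phi>0" using \<psi> unfolding \<Psi>_def by blast
    have wf\<Phi>0: "\<forall>\<phi>\<in>\<Phi>0. wf_fm L \<phi>" using \<Phi>0(2) fvs by blast
    have "graph_asg G e0 w \<in> B \<and> esort M (graph_asg G e0 w) = vsort L w" if w: "w \<in> fv \<psi> - {w0}" for w
    proof (cases "w \<in> fst ` G")
      case True
      then obtain b where "(w, b) \<in> G" by force
      then show ?thesis
        using graph_asg_pair[OF G(3)] finsat_extending_in_carr[OF G(1) _ G(2)] unfolding B_def by force
    next
      case False
      then have "w \<in> V - W" using w wf_fv_step_fm(2)[OF \<Phi>0(3) wf\<Phi>0] \<Phi>0(1,2) fvs by blast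
      moreover have "graph_asg G e0 w = e0 w" using False by (rule graph_asg_outside)
      ultimately show ?thesis using e0 unfolding B_def asg_on_def by auto
    qed
    then show ?thesis using wf_fv_step_fm(1)[OF \<Phi>0(3) wf\<Phi>0] \<Phi>0(1) by blast
  qed
  have \<Psi>_finsat: "\<exists>b\<in>carr M. esort M b = vsort L w0 \<and> (\<forall>\<psi>\<in>\<Psi>0. sat L M ((graph_asg G e0)(w0 := b)) \<psi>)"
    if \<Psi>0: "\<Psi>0 \<subseteq> \<Psi>" "finite \<Psi>0" for \<Psi>0
  proof -
    obtain \<FF> where \<FF>: "\<FF> \<subseteq> {\<Phi>0. \<Phi>0 \<subseteq> \<Phi> \<and> finite \<Phi>0}" "finite \<FF>" "\<Psi>0 = step_fm W G w0 ` \<FF>"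
      using finite_subset_image[OF \<Psi>0(2), of "step_fm W G w0" "{\<Phi>0. \<Phi>0 \<subseteq> \<Phi> \<and> finite \<Phi>0}"] \<Psi>0(1)
      unfolding \<Psi>_def by blast
    then show ?thesis using step_fm_finsat[OF wf G(1,3) w0(1) \<FF>(1,2)] by blast
  qed
  obtain b where b: "b \<in> carr M" "esort M b = vsort L w0"
    "\<forall>\<psi>\<in>\<Psi>. sat L M ((graph_asg G e0)(w0 := b)) \<psi>"
    using satd[unfolded saturated_def, rule_format, of B \<Psi> w0 "graph_asg G e0"]
      step_fm_params[OF inf small WV e0 G] \<Psi>_params \<Psi>_finsat unfolding B_def by blast
  have "finsat_extending L M W e0 \<Phi> (insert (w0, b) G)"
    unfolding finsat_extending_def
  proof (intro allI impI)
    fix \<Phi>0 assume "\<Phi>0 \<subseteq> \<Phi>" "finite \<Phi>0"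
    then have "sat L M ((graph_asg G e0)(w0 := b)) (step_fm W G w0 \<Phi>0)" using b(3) unfolding \<Psi>_def by blast
    then show "\<exists>v. solution L M W e0 \<Phi>0 v \<and> (\<forall>(w, c)\<in>insert (w0, b) G. v w = c)"
      by (rule solution_of_sat_step_fm[OF wf G w0 \<open>finite \<Phi>0\<close> b(1,2)])
  qed
  then show ?thesis by blast
qed

lemma single_valued_insert: "single_valued G \<Longrightarrow> w \<notin> fst ` G \<Longrightarrow> single_valued (insert (w, b) G)"
  unfolding single_valued_def by (auto simp: rev_image_eqI)

lemma finsat_extending_total_solution:
  assumes G: "finsat_extending L M W e0 \<Phi> G" "fst ` G = W" "single_valued G"
  shows "solution L M W e0 \<Phi> (graph_asg G e0)"
proof -
  have G_carr: "b \<in> carr M \<and> esort M b = vsort L w" if "(w, b) \<in> G" for w b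
    using finsat_extending_in_carr[OF G(1) that] G(2) by blast
  have sol: "solution L M W e0 \<Phi>0 (graph_asg G e0)" if \<Phi>0: "\<Phi>0 \<subseteq> \<Phi>" "finite \<Phi>0" for \<Phi>0
  proof -
    obtain u where u: "solution L M W e0 \<Phi>0 u" "\<forall>(w, b)\<in>G. u w = b"
      using G(1) \<Phi>0 unfolding finsat_extending_def by blast
    have u_G: "u w = b" if "(w, b) \<in> G" for w b using u(2) that by auto
    have "graph_asg G u w = graph_asg G e0 w" for w
      using G(2) u(1) unfolding graph_asg_def solution_def by simp
    moreover have "solution L M W e0 \<Phi>0 (graph_asg G u)"
      using solution_graph_asg[OF u(1) G(3)] G(2) G_carr u_G by blast
    ultimately show ?thesis by (metis ext)
  qed
  have "\<forall>\<phi>\<in>\<Phi>. sat L M (graph_asg G e0) \<phi>"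
  proof
    fix \<phi> assume "\<phi> \<in> \<Phi>"
    then have "solution L M W e0 {\<phi>} (graph_asg G e0)" using sol by simp
    then show "sat L M (graph_asg G e0) \<phi>" unfolding solution_def by simp
  qed
  moreover have "solution L M W e0 {} (graph_asg G e0)" using sol by simp
  ultimately show ?thesis unfolding solution_def by blast
qed

lemma saturated_realizes:
  fixes L :: "('s,'f,'r,'v) lang" and M :: "('s,'f,'r,'a) struc" and K :: "'k set"
    and \<Phi> :: "('f,'r,'v) fm set"
  assumes satd: "saturated L M K" and wf: "wf_struc L M" and inf: "infinite K"
    and small: "V \<prec> K" and WV: "W \<subseteq> V" and fvs: "\<forall>\<phi>\<in>\<Phi>. wf_fm L \<phi> \<and> fv \<phi> \<subseteq> V"
    and e0: "asg_on L M (V - W) e0"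
    and fin: "\<forall>\<Phi>0\<subseteq>\<Phi>. finite \<Phi>0 \<longrightarrow> (\<exists>v. solution L M W e0 \<Phi>0 v)"
  shows "\<exists>v. solution L M W e0 \<Phi> v"
proof -
  define \<A> where "\<A> = {G. fst ` G \<subseteq> W \<and> single_valued G \<and> finsat_extending L M W e0 \<Phi> G}"
  have base: "finsat_extending L M W e0 \<Phi> {}" unfolding finsat_extending_def using fin by blast
  have "\<Union>C \<in> \<A>" if "subset.chain \<A> C" for C
    using that unfolding \<A>_def by (rule finsat_extending_Union_chain[OF _ base])
  then obtain Gm where Gm: "Gm \<in> \<A>" and maximal: "\<forall>G\<in>\<A>. Gm \<subseteq> G \<longrightarrow> G = Gm"
    using subset_Zorn'[of \<A>] by blast
  have Gm_props: "finsat_extending L M W e0 \<Phi> Gm" "fst ` Gm \<subseteq> W" "single_valued Gm"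
    using Gm unfolding \<A>_def by auto
  have "W \<subseteq> fst ` Gm"
  proof
    fix w0 assume w0: "w0 \<in> W"
    show "w0 \<in> fst ` Gm"
    proof (rule ccontr)
      assume new: "w0 \<notin> fst ` Gm"
      obtain b where b: "finsat_extending L M W e0 \<Phi> (insert (w0, b) Gm)"
        using finsat_extending_insert[OF satd wf inf small WV fvs e0 Gm_props w0 new] by (elim exE)
      moreover have "fst ` insert (w0, b) Gm \<subseteq> W" using Gm_props(2) w0 by simp
      ultimately have "insert (w0, b) Gm \<in> \<A>"
        using single_valued_insert[OF Gm_props(3) new] unfolding \<A>_def by blast
      then have eq: "insert (w0, b) Gm = Gm" by (rule maximal[rule_format, OF _ subset_insertI])
      have "w0 \<in> fst ` insert (w0, b) Gm" by simp
      then show False using new unfolding eq by contradiction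
    qed
  qed
  then have "fst ` Gm = W" using Gm_props(2) by blast
  then show ?thesis using finsat_extending_total_solution[OF Gm_props(1) _ Gm_props(3)] by blast
qed

section \<open>Strong homogeneity for assignments\<close>

lemma extend_renaming:
  fixes L :: "('s,'f,'r,'v) lang" and K :: "'k set"
  assumes fin: "finite F" and S: "S \<prec> K" and inf: "infinite K"
    and sorts: "\<forall>s. K \<lesssim> {z. vsort L z = s}"
    and t0: "inj_on t0 P" "t0 ` P \<subseteq> S" "\<forall>z\<in>P. vsort L (t0 z) = vsort L z"
  shows "\<exists>\<rho>. (\<forall>z\<in>P. \<rho> z = t0 z) \<and> inj_on \<rho> F \<and> (\<forall>z\<in>F. vsort L (\<rho> z) = vsort L z)"
proof -
  have "F - P \<prec> K" using fin finite_lesspoll_infinite[OF inf] by blast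
  then obtain \<rho>1 where \<rho>1: "inj_on \<rho>1 (F - P)" "\<forall>z\<in>F - P. vsort L (\<rho>1 z) = vsort L z"
    "\<rho>1 ` (F - P) \<inter> S = {}"
    using fresh_vars[OF inf sorts _ S, of "F - P" "vsort L"] by blast
  define \<rho> where "\<rho> z = (if z \<in> P then t0 z else \<rho>1 z)" for z
  have "inj_on \<rho> (F \<inter> P)" using t0(1) unfolding inj_on_def \<rho>_def by simp
  moreover have "inj_on \<rho> (F - P)" using \<rho>1(1) unfolding inj_on_def \<rho>_def by simp
  moreover have "\<rho> ` (F \<inter> P) \<inter> \<rho> ` (F - P) = {}" using t0(2) \<rho>1(3) unfolding \<rho>_def by auto
  ultimately have "inj_on \<rho> ((F \<inter> P) \<union> (F - P))" by (auto simp: inj_on_Un)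
  moreover have "(F \<inter> P) \<union> (F - P) = F" by blast
  moreover have "\<forall>z\<in>F. vsort L (\<rho> z) = vsort L z" using t0(3) \<rho>1(2) unfolding \<rho>_def by auto
  moreover have "\<forall>z\<in>P. \<rho> z = t0 z" unfolding \<rho>_def by simp
  ultimately show ?thesis by metis
qed

text \<open>Substitution of \<open>h w\<close> for each free variable \<open>w\<close> of \<open>\<phi>\<close>, where \<open>h\<close> need not be injective:
  \<open>\<phi>\<close> is renamed apart by \<open>\<rho>\<close> and the renamed variables are equated with their targets.\<close>

definition subst_fm :: "('v \<Rightarrow> 'v) \<Rightarrow> ('v \<Rightarrow> 'v) \<Rightarrow> ('f,'r,'v) fm \<Rightarrow> ('f,'r,'v) fm" where
  "subst_fm \<rho> h \<phi> = fex_set (\<rho> ` fv \<phi>)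
     (FConj (fconj_set ((\<lambda>w. FEq (Var (\<rho> w)) (Var (h w))) ` fv \<phi>)) (rename_fm \<rho> \<phi>))"

lemma wf_fv_subst_fm:
  assumes \<phi>: "wf_fm L \<phi>" and inj: "inj_on \<rho> (vars \<phi>)" and rs: "\<forall>z\<in>vars \<phi>. vsort L (\<rho> z) = vsort L z"
    and dis: "\<rho> ` vars \<phi> \<inter> W = {}" and hW: "\<forall>w\<in>fv \<phi>. h w \<in> W \<and> vsort L (h w) = vsort L w"
  shows "wf_fm L (subst_fm \<rho> h \<phi>) \<and> fv (subst_fm \<rho> h \<phi>) \<subseteq> W"
proof
  have "wf_fm L (FEq (Var (\<rho> w)) (Var (h w)))" if "w \<in> fv \<phi>" for w
    using rs hW that fv_vars by (fastforce intro!: wt.intros)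
  moreover have "wf_fm L (rename_fm \<rho> \<phi>)" using wf_rename_fm[OF \<phi> rs] .
  ultimately show "wf_fm L (subst_fm \<rho> h \<phi>)"
    unfolding subst_fm_def wf_fex_set by (simp add: wf_fconj_set finite_fv)
  have "fv (subst_fm \<rho> h \<phi>) = ((\<Union>w\<in>fv \<phi>. {\<rho> w, h w}) \<union> \<rho> ` fv \<phi>) - \<rho> ` fv \<phi>"
    unfolding subst_fm_def by (simp add: fv_fex_set fv_fconj_set finite_fv insert_commute fv_rename_fm[OF inj])
  then show "fv (subst_fm \<rho> h \<phi>) \<subseteq> W" using hW by auto
qed

lemma sat_subst_fm:
  assumes wf: "wf_struc L M" and inj: "inj_on \<rho> (vars \<phi>)" and rs: "\<forall>z\<in>vars \<phi>. vsort L (\<rho> z) = vsort L z"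
    and dis: "\<rho> ` vars \<phi> \<inter> W = {}" and hW: "\<forall>w\<in>fv \<phi>. h w \<in> W \<and> vsort L (h w) = vsort L w"
    and u: "asg_on L M W u"
  shows "sat L M u (subst_fm \<rho> h \<phi>) \<longleftrightarrow> sat L M (u \<circ> h) \<phi>"
proof -
  have fin: "finite (\<rho> ` fv \<phi>)" "finite ((\<lambda>w. FEq (Var (\<rho> w)) (Var (h w))) ` fv \<phi>)"
    using finite_fv by blast+
  have fvv: "fv \<phi> \<subseteq> vars \<phi>" by (rule fv_vars)
  have injf: "inj_on \<rho> (fv \<phi>)" by (rule inj_on_subset[OF inj fvv])
  have hnot: "h w \<notin> \<rho> ` fv \<phi>" if "w \<in> fv \<phi>" for w
    using that dis hW fvv by blast
  show ?thesis
  proof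
    assume "sat L M u (subst_fm \<rho> h \<phi>)"
    then obtain v' where v': "\<forall>w. w \<notin> \<rho> ` fv \<phi> \<longrightarrow> v' w = u w"
      "\<forall>w\<in>fv \<phi>. v' (\<rho> w) = v' (h w)" "sat L M v' (rename_fm \<rho> \<phi>)"
      unfolding subst_fm_def sat_fex_set[OF fin(1)] by (auto simp: sat_fconj_set[OF wf fin(2)])
    have "sat L M (v' \<circ> \<rho>) \<phi>" using v'(3) sat_rename_fm[OF inj rs] by blast
    moreover have "sat L M (v' \<circ> \<rho>) \<phi> = sat L M (u \<circ> h) \<phi>"
      by (rule sat_cong) (use v'(1,2) hnot in auto)
    ultimately show "sat L M (u \<circ> h) \<phi>" by simp
  next
    assume s: "sat L M (u \<circ> h) \<phi>"
    define v' where "v' z = (if z \<in> \<rho> ` fv \<phi> then u (h (inv_into (fv \<phi>) \<rho> z)) else u z)" for z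
    have v'_\<rho>: "v' (\<rho> w) = u (h w)" if "w \<in> fv \<phi>" for w
      unfolding v'_def using injf that by (simp add: inv_into_f_f)
    have v'_h: "v' (h w) = u (h w)" if "w \<in> fv \<phi>" for w
      unfolding v'_def using hnot that by simp
    have "asg_on L M (\<rho> ` fv \<phi>) v'"
      unfolding asg_on_def
    proof
      fix z assume "z \<in> \<rho> ` fv \<phi>"
      then obtain w where w: "w \<in> fv \<phi>" "z = \<rho> w" by blast
      then have "vsort L z = vsort L w" using rs fvv by auto
      then show "v' z \<in> carr M \<and> esort M (v' z) = vsort L z"
        using v'_\<rho>[OF w(1)] w hW u unfolding asg_on_def by auto
    qed
    moreover have "sat L M v' (rename_fm \<rho> \<phi>)"
    proof -
      have "sat L M (v' \<circ> \<rho>) \<phi> = sat L M (u \<circ> h) \<phi>"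
        by (rule sat_cong) (use v'_\<rho> in auto)
      then show ?thesis using s sat_rename_fm[OF inj rs, of M v'] by simp
    qed
    moreover have "\<forall>w. w \<notin> \<rho> ` fv \<phi> \<longrightarrow> v' w = u w" unfolding v'_def by simp
    moreover have "\<forall>w\<in>fv \<phi>. v' (\<rho> w) = v' (h w)" using v'_\<rho> v'_h by simp
    ultimately show "sat L M u (subst_fm \<rho> h \<phi>)"
      unfolding subst_fm_def sat_fex_set[OF fin(1)] by (auto simp: sat_fconj_set[OF wf fin(2)])
  qed
qed

lemma sat_comp_same_type:
  fixes L :: "('s,'f,'r,'v) lang" and M :: "('s,'f,'r,'a) struc" and K :: "'k set"
  assumes wf: "wf_struc L M" and inf: "infinite K" and sorts: "\<forall>s. K \<lesssim> {z. vsort L z = s}"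
    and WK: "W \<prec> K" and c: "asg_on L M W c" and c': "asg_on L M W c'"
    and same_type: "\<forall>\<chi>. wf_fm L \<chi> \<and> fv \<chi> \<subseteq> W \<longrightarrow> (sat L M c \<chi> \<longleftrightarrow> sat L M c' \<chi>)"
    and \<phi>: "wf_fm L \<phi>" and hW: "\<forall>w\<in>fv \<phi>. h w \<in> W \<and> vsort L (h w) = vsort L w"
  shows "sat L M (c \<circ> h) \<phi> \<longleftrightarrow> sat L M (c' \<circ> h) \<phi>"
proof -
  have "vars \<phi> \<prec> K" using finite_vars finite_lesspoll_infinite[OF inf] by blast
  then obtain \<rho> where \<rho>: "inj_on \<rho> (vars \<phi>)" "\<forall>z\<in>vars \<phi>. vsort L (\<rho> z) = vsort L z"
    "\<rho> ` vars \<phi> \<inter> W = {}"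
    using fresh_vars[OF inf sorts _ WK, of "vars \<phi>" "vsort L"] by blast
  have "wf_fm L (subst_fm \<rho> h \<phi>) \<and> fv (subst_fm \<rho> h \<phi>) \<subseteq> W"
    using wf_fv_subst_fm[OF \<phi> \<rho> hW] .
  then show ?thesis
    using same_type sat_subst_fm[OF wf \<rho> hW c] sat_subst_fm[OF wf \<rho> hW c'] by blast
qed

lemma strongly_homogeneous_conjugate:
  fixes L :: "('s,'f,'r,'v) lang" and M :: "('s,'f,'r,'a) struc" and K :: "'k set"
  assumes sh: "strongly_homogeneous L M K" and wf: "wf_struc L M" and inf: "infinite K"
    and sorts: "\<forall>s. K \<lesssim> {z. vsort L z = s}" and WK: "W \<prec> K"
    and c: "asg_on L M W c" and c': "asg_on L M W c'"
    and tp: "\<forall>\<chi>. wf_fm L \<chi> \<and> fv \<chi> \<subseteq> W \<and> sat L M c \<chi> \<longrightarrow> sat L M c' \<chi>"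
  shows "\<exists>\<sigma>\<in>Aut L M. \<forall>w\<in>W. \<sigma> (c w) = c' w"
proof -
  have same_type: "\<forall>\<chi>. wf_fm L \<chi> \<and> fv \<chi> \<subseteq> W \<longrightarrow> (sat L M c \<chi> \<longleftrightarrow> sat L M c' \<chi>)"
    using tp[rule_format, of "FNeg _"] tp by auto
  define B where "B = c ` W"
  have B_carr: "B \<subseteq> carr M" using c unfolding B_def asg_on_def by auto
  have B_small: "B \<prec> K" unfolding B_def by (rule lesspoll_trans1[OF image_lepoll WK])
  define name where "name b = (SOME w. w \<in> W \<and> c w = b)" for b
  have name: "name b \<in> W \<and> c (name b) = b" if "b \<in> B" for b
    using someI_ex[of "\<lambda>w. w \<in> W \<and> c w = b"] that unfolding B_def name_def by blast
  have well_defined: "c' w = c' w'" if "w \<in> W" "w' \<in> W" "c w = c w'" for w w'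
  proof -
    have "vsort L w = vsort L w'" using c that unfolding asg_on_def by metis
    then have "wf_fm L (FEq (Var w) (Var w'))" by (auto intro!: wt.intros)
    then show ?thesis using same_type that by fastforce
  qed
  define f where "f b = c' (name b)" for b
  have "elementary_on L M B f"
    unfolding elementary_on_def
  proof (intro conjI allI impI ballI)
    fix b assume b: "b \<in> B"
    have "vsort L (name b) = esort M b" using name[OF b] c unfolding asg_on_def by metis
    then show "f b \<in> carr M" "esort M (f b) = esort M b"
      using name[OF b] c' unfolding asg_on_def f_def by auto
  next
    fix \<phi> :: "('f,'r,'v) fm" and e :: "'v \<Rightarrow> 'a"
    assume e: "wf_fm L \<phi> \<and> (\<forall>w\<in>fv \<phi>. e w \<in> B \<and> esort M (e w) = vsort L w)"
    have hW: "\<forall>w\<in>fv \<phi>. name (e w) \<in> W \<and> vsort L (name (e w)) = vsort L w"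
      using name e c unfolding asg_on_def by metis
    have "sat L M e \<phi> = sat L M (c \<circ> (name \<circ> e)) \<phi>"
      by (rule sat_cong) (use name e in auto)
    also have "\<dots> = sat L M (c' \<circ> (name \<circ> e)) \<phi>"
      using sat_comp_same_type[OF wf inf sorts WK c c' same_type] e hW by simp
    also have "\<dots> = sat L M (f \<circ> e) \<phi>"
      by (simp add: f_def comp_def)
    finally show "sat L M e \<phi> = sat L M (f \<circ> e) \<phi>" .
  qed
  then obtain \<sigma> where \<sigma>: "\<sigma> \<in> Aut L M" "\<forall>b\<in>B. \<sigma> b = f b"
    using sh B_carr B_small unfolding strongly_homogeneous_def by blast
  have "\<sigma> (c w) = c' w" if "w \<in> W" for w
  proof -
    have cB: "c w \<in> B" unfolding B_def using that by blast
    then have "\<sigma> (c w) = c' (name (c w))" using \<sigma>(2) f_def by simp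
    also have "\<dots> = c' w" using well_defined[of "name (c w)" w] name[OF cB] that by simp
    finally show ?thesis .
  qed
  then show ?thesis using \<sigma>(1) by blast
qed

lemma rename_pair_fm:
  fixes x y p q :: "'i \<Rightarrow> 'v" and L :: "('s,'f,'r,'v) lang" and M :: "('s,'f,'r,'a) struc"
    and K :: "'k set"
  assumes ix: "inj x" and iy: "inj y" and dj: "range x \<inter> range y = {}"
    and ip: "inj p" and iq: "inj q" and pq: "range p \<inter> range q = {}"
    and ps: "\<forall>i. vsort L (p i) = vsort L (x i)" and qs: "\<forall>i. vsort L (q i) = vsort L (y i)"
    and S: "range p \<union> range q \<subseteq> S" "S \<prec> K" and inf: "infinite K"
    and sorts: "\<forall>s. K \<lesssim> {z. vsort L z = s}" and \<phi>: "fm_in L x y \<phi>"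
  shows "\<exists>\<chi>. wf_fm L \<chi> \<and> fv \<chi> \<subseteq> range p \<union> range q \<and>
            (\<forall>v. sat L M v \<chi> \<longleftrightarrow> sat L M (pair_asg x y (v \<circ> p) (v \<circ> q)) \<phi>)"
proof -
  define t0 where "t0 z = (if z \<in> range x then p (inv x z) else q (inv y z))" for z
  have t0x: "t0 (x i) = p i" for i using ix by (simp add: t0_def)
  have t0y: "t0 (y i) = q i" for i
  proof -
    have "y i \<notin> range x" using dj by blast
    then show ?thesis using iy by (simp add: t0_def)
  qed
  have t0_range: "t0 ` range x = range p" "t0 ` range y = range q"
    by (simp_all add: image_image t0x t0y)
  have "inj_on t0 (range x)"
  proof (rule inj_onI)
    fix z z' assume "z \<in> range x" "z' \<in> range x" "t0 z = t0 z'"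
    then show "z = z'" using ip by (auto simp: t0x dest: injD)
  qed
  moreover have "inj_on t0 (range y)"
  proof (rule inj_onI)
    fix z z' assume "z \<in> range y" "z' \<in> range y" "t0 z = t0 z'"
    then show "z = z'" using iq by (auto simp: t0y dest: injD)
  qed
  moreover have "t0 ` (range x - range y) \<inter> t0 ` (range y - range x) = {}"
  proof -
    have "range x - range y = range x" "range y - range x = range y" using dj by blast+
    then show ?thesis using pq t0_range by simp
  qed
  ultimately have t0_inj: "inj_on t0 (range x \<union> range y)" unfolding inj_on_Un by blast
  have t0_S: "t0 ` (range x \<union> range y) \<subseteq> S" using S(1) t0_range by (simp add: image_Un)
  have t0_sorts: "\<forall>z\<in>range x \<union> range y. vsort L (t0 z) = vsort L z"
    using ps qs by (auto simp: t0x t0y)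
  obtain \<rho> where \<rho>: "\<forall>z\<in>range x \<union> range y. \<rho> z = t0 z" "inj_on \<rho> (vars \<phi>)"
    "\<forall>z\<in>vars \<phi>. vsort L (\<rho> z) = vsort L z"
    using extend_renaming[OF finite_vars S(2) inf sorts t0_inj t0_S t0_sorts] by blast
  have fvP: "fv \<phi> \<subseteq> range x \<union> range y" using \<phi> unfolding fm_in_def by blast
  have "wf_fm L (rename_fm \<rho> \<phi>)" using wf_rename_fm \<phi> \<rho>(3) unfolding fm_in_def by blast
  moreover have "fv (rename_fm \<rho> \<phi>) \<subseteq> range p \<union> range q"
    using fv_rename_fm[OF \<rho>(2)] fvP \<rho>(1) by (auto simp: t0x t0y)
  moreover have "sat L M v (rename_fm \<rho> \<phi>) \<longleftrightarrow> sat L M (pair_asg x y (v \<circ> p) (v \<circ> q)) \<phi>" for v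
  proof -
    have "sat L M v (rename_fm \<rho> \<phi>) = sat L M (v \<circ> \<rho>) \<phi>" by (rule sat_rename_fm[OF \<rho>(2,3)])
    also have "\<dots> = sat L M (pair_asg x y (v \<circ> p) (v \<circ> q)) \<phi>"
    proof (rule sat_cong, intro ballI)
      fix z assume "z \<in> fv \<phi>"
      then consider i where "z = x i" | i where "z = y i" using fvP by blast
      then show "(v \<circ> \<rho>) z = pair_asg x y (v \<circ> p) (v \<circ> q) z"
        by cases (use \<rho>(1) ix iy dj in \<open>auto simp: pair_asg_def t0x t0y\<close>)
    qed
    finally show ?thesis .
  qed
  ultimately show ?thesis by blast
qed

section \<open>Chains of conjugates\<close>

definition rel_asg :: "'v set \<Rightarrow> ('v \<Rightarrow> 'a) \<Rightarrow> ('v \<Rightarrow> 'a) \<Rightarrow> ('a \<Rightarrow> 'a) \<Rightarrow> 'v \<Rightarrow> 'a" where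
  "rel_asg U d e \<sigma> z = (if z \<in> U then \<sigma> (d z) else e z)"

locale monster_tuple =
  fixes L :: "('s,'f,'r,'v) lang" and T :: "('f,'r,'v) fm set"
    and M :: "('s,'f,'r,'a) struc" and K :: "'k set"
    and x y :: "'i \<Rightarrow> 'v" and a :: "'i \<Rightarrow> 'a"
  assumes monster: "monster L T M K"
    and index_small: "(UNIV :: 'i set) \<prec> K"
    and inj_x: "inj x" and inj_y: "inj y" and disjoint_xy: "range x \<inter> range y = {}"
    and sort_xy: "\<forall>i. vsort L (x i) = vsort L (y i)"
    and a_sorted: "\<forall>i. a i \<in> carr M \<and> esort M (a i) = vsort L (x i)"
begin

lemma model: "is_model L M T" and wf: "wf_struc L M" and infinite_K: "infinite K"
  and sorts_large: "\<forall>s. K \<lesssim> {z. vsort L z = s}" and saturated: "saturated L M K"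
  and homogeneous: "strongly_homogeneous L M K"
  using monster unfolding monster_def is_model_def by blast+

lemma sorted_tuple_a: "sorted_tuple L M x a"
  using a_sorted unfolding sorted_tuple_def by blast

lemma sorted_tuple_conj: "g \<in> Aut L M \<Longrightarrow> sorted_tuple L M x (g \<circ> a)"
  using sorted_tuple_Aut a_sorted unfolding sorted_tuple_def by blast

lemma sat_pair_conj:
  assumes "fm_in L x y \<phi>" and "h \<in> Aut L M" "g \<in> Aut L M" "g' \<in> Aut L M"
  shows "sat L M (pair_asg x y (h \<circ> g \<circ> a) (h \<circ> g' \<circ> a)) \<phi> \<longleftrightarrow>
    sat L M (pair_asg x y (g \<circ> a) (g' \<circ> a)) \<phi>"
  using sat_pair_asg_Aut[OF inj_x inj_y disjoint_xy sort_xy sorted_tuple_conj sorted_tuple_conj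
      assms(1,2) wf] assms(3,4) by (simp add: comp_assoc)

lemma A_set_iff: "\<tau> \<in> A_set L M \<pi> x y a \<longleftrightarrow> \<tau> \<in> Aut L M \<and> (\<forall>\<phi>\<in>\<pi>. sat L M (pair_asg x y (\<tau> \<circ> a) a) \<phi>)"
  by (simp add: A_set_def tup_asg_eq_pair_asg)

text \<open>If \<open>\<sigma>\<close> is the product of the factors \<open>\<tau>\<^sub>j\<^bsup>\<epsilon>\<^sub>j\<^esup>\<close>, then \<open>g k\<close> stands for \<open>\<sigma>\<inverse>\<close> composed with
  the first \<open>k\<close> factors; the tuples \<open>g k \<circ> a\<close> form a chain of conjugates of \<open>a\<close> from \<open>\<sigma>\<inverse> a\<close>
  to \<open>a\<close> whose consecutive members are related by \<open>\<pi> k\<close>.\<close>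

definition Aut_chain :: "(nat \<Rightarrow> ('f,'r,'v) fm set) \<Rightarrow> (nat \<Rightarrow> int) \<Rightarrow> nat \<Rightarrow> ('a \<Rightarrow> 'a)
    \<Rightarrow> (nat \<Rightarrow> 'a \<Rightarrow> 'a) \<Rightarrow> bool" where
  "Aut_chain \<pi> \<epsilon> n \<sigma> g \<longleftrightarrow> g 0 = ginv M \<sigma> \<and> g n = id \<and> (\<forall>k\<le>n. g k \<in> Aut L M) \<and>
     (\<forall>k<n. sat_pow L M x y (\<pi> k) (\<epsilon> k) (g (Suc k) \<circ> a) (g k \<circ> a))"

lemma setprods_imp_Aut_chain:
  assumes fm: "\<forall>k<n. \<forall>\<phi>\<in>\<pi> k. fm_in L x y \<phi>"
    and \<sigma>: "\<sigma> \<in> setprods M (\<lambda>k. A_set L M (\<pi> k) x y a) \<epsilon> n"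
  shows "\<sigma> \<in> Aut L M \<and> (\<exists>g. Aut_chain \<pi> \<epsilon> n \<sigma> g)"
proof -
  obtain \<tau> where \<tau>: "\<forall>k<n. \<tau> k \<in> A_set L M (\<pi> k) x y a" and \<sigma>_eq: "\<sigma> = gprod M \<tau> \<epsilon> n"
    using \<sigma> unfolding setprods_iff_gprod by blast
  have \<tau>_Aut: "\<tau> k \<in> Aut L M" if "k < n" for k using \<tau> that A_set_iff by blast
  have gprod_Aut': "gprod M \<tau> \<epsilon> k \<in> Aut L M" if "k \<le> n" for k
    using \<tau>_Aut that by (intro gprod_Aut) auto
  have \<sigma>_Aut: "\<sigma> \<in> Aut L M" using gprod_Aut'[of n] \<sigma>_eq by simp
  define g where "g k = ginv M \<sigma> \<circ> gprod M \<tau> \<epsilon> k" for k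
  have g_Aut: "g k \<in> Aut L M" if "k \<le> n" for k
    unfolding g_def using comp_Aut[OF ginv_Aut[OF \<sigma>_Aut] gprod_Aut'[OF that]] .
  have "sat_pow L M x y (\<pi> k) (\<epsilon> k) (g (Suc k) \<circ> a) (g k \<circ> a)" if k: "k < n" for k
  proof (cases "\<epsilon> k = 1")
    case True
    have "g (Suc k) = g k \<circ> \<tau> k" using True unfolding g_def by (simp add: gpow_def comp_assoc)
    then show ?thesis
      using True \<tau> k fm sat_pair_conj[OF _ g_Aut[of k] \<tau>_Aut[OF k] id_Aut] unfolding sat_pow_def A_set_iff
      by (simp add: comp_assoc)
  next
    case False
    define m where "m = g k \<circ> ginv M (\<tau> k)"
    have m_Aut: "m \<in> Aut L M" unfolding m_def using g_Aut[of k] k by (intro comp_Aut ginv_Aut \<tau>_Aut) simp_all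
    have "g (Suc k) = m" using False unfolding m_def g_def by (simp add: gpow_def comp_assoc)
    moreover have "g k = m \<circ> \<tau> k"
      unfolding m_def using ginv_left[OF \<tau>_Aut[OF k]] by (simp add: comp_assoc)
    ultimately show ?thesis
      using False \<tau> k fm sat_pair_conj[OF _ m_Aut \<tau>_Aut[OF k] id_Aut] unfolding sat_pow_def A_set_iff
      by (simp add: comp_assoc)
  qed
  moreover have "g 0 = ginv M \<sigma>" by (simp add: g_def)
  moreover have "g n = id" unfolding g_def \<sigma>_eq[symmetric] by (rule ginv_left[OF \<sigma>_Aut])
  ultimately have "Aut_chain \<pi> \<epsilon> n \<sigma> g" using g_Aut unfolding Aut_chain_def by blast
  then show ?thesis using \<sigma>_Aut by blast
qed

lemma Aut_chain_imp_setprods: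
  assumes fm: "\<forall>k<n. \<forall>\<phi>\<in>\<pi> k. fm_in L x y \<phi>"
    and \<sigma>: "\<sigma> \<in> Aut L M" and g: "Aut_chain \<pi> \<epsilon> n \<sigma> g"
  shows "\<sigma> \<in> setprods M (\<lambda>k. A_set L M (\<pi> k) x y a) \<epsilon> n"
proof -
  have g0: "g 0 = ginv M \<sigma>" and gn: "g n = id" and g_Aut: "\<And>k. k \<le> n \<Longrightarrow> g k \<in> Aut L M"
    and steps: "\<And>k. k < n \<Longrightarrow> sat_pow L M x y (\<pi> k) (\<epsilon> k) (g (Suc k) \<circ> a) (g k \<circ> a)"
    using g unfolding Aut_chain_def by auto
  define \<tau> where "\<tau> k = (if \<epsilon> k = 1 then ginv M (g k) \<circ> g (Suc k) else ginv M (g (Suc k)) \<circ> g k)" for k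
  have gpow_\<tau>: "gpow M (\<tau> k) (\<epsilon> k) = ginv M (g k) \<circ> g (Suc k)" if k: "k < n" for k
  proof (cases "\<epsilon> k = 1")
    case False
    have "g k \<in> Aut L M" "g (Suc k) \<in> Aut L M" using g_Aut k by simp_all
    then have "ginv M (ginv M (g (Suc k)) \<circ> g k) = ginv M (g k) \<circ> g (Suc k)"
      using ginv_comp[OF ginv_Aut, of "g (Suc k)" L M "g k"] ginv_ginv[of "g (Suc k)" L M] by simp
    then show ?thesis using False by (simp add: \<tau>_def gpow_def)
  qed (simp add: \<tau>_def gpow_def)
  have gprod_\<tau>: "gprod M \<tau> \<epsilon> k = \<sigma> \<circ> g k" if "k \<le> n" for k
    using that
  proof (induction k)
    case 0 then show ?case using ginv_right[OF \<sigma>] by (simp add: g0)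
  next
    case (Suc k)
    have k: "k < n" "k \<le> n" using Suc.prems by simp_all
    have "gprod M \<tau> \<epsilon> (Suc k) = gprod M \<tau> \<epsilon> k \<circ> gpow M (\<tau> k) (\<epsilon> k)" by simp
    also have "\<dots> = \<sigma> \<circ> (g k \<circ> ginv M (g k)) \<circ> g (Suc k)"
      by (simp only: Suc.IH[OF k(2)] gpow_\<tau>[OF k(1)] comp_assoc)
    also have "\<dots> = \<sigma> \<circ> g (Suc k)" using ginv_right[OF g_Aut[of k]] Suc(2) by simp
    finally show ?case .
  qed
  have "\<tau> k \<in> A_set L M (\<pi> k) x y a" if k: "k < n" for k
  proof -
    have Aut: "g k \<in> Aut L M" "g (Suc k) \<in> Aut L M" "ginv M (g k) \<in> Aut L M"
      "ginv M (g (Suc k)) \<in> Aut L M" using g_Aut k by (simp_all add: ginv_Aut)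
    have "sat L M (pair_asg x y (\<tau> k \<circ> a) a) \<phi>" if \<phi>: "\<phi> \<in> \<pi> k" for \<phi>
    proof (cases "\<epsilon> k = 1")
      case True
      then have "sat L M (pair_asg x y (g (Suc k) \<circ> a) (g k \<circ> a)) \<phi>"
        using steps[OF k] \<phi> unfolding sat_pow_def by simp
      then show ?thesis
        using True sat_pair_conj[OF _ Aut(3) Aut(2) Aut(1)] fm k \<phi> ginv_left[OF Aut(1)]
        by (simp add: \<tau>_def comp_assoc)
    next
      case False
      then have "sat L M (pair_asg x y (g k \<circ> a) (g (Suc k) \<circ> a)) \<phi>"
        using steps[OF k] \<phi> unfolding sat_pow_def by simp
      then show ?thesis
        using False sat_pair_conj[OF _ Aut(4) Aut(1) Aut(2)] fm k \<phi> ginv_left[OF Aut(2)]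
        by (simp add: \<tau>_def comp_assoc)
    qed
    moreover have "\<tau> k \<in> Aut L M" using Aut by (simp add: \<tau>_def comp_Aut)
    ultimately show ?thesis unfolding A_set_iff by blast
  qed
  moreover have "\<sigma> = gprod M \<tau> \<epsilon> n" using gprod_\<tau>[of n] gn by simp
  ultimately show ?thesis unfolding setprods_iff_gprod by blast
qed

lemma A_set_entailed:
  assumes fm: "\<forall>\<psi>\<in>\<pi>. fm_in L x y \<psi>" and \<phi>: "fm_in L x y \<phi>"
    and ent: "entails L T \<pi> \<phi> TYPE('a)"
  shows "A_set L M \<pi> x y a \<subseteq> A_set L M {\<phi>} x y a"
proof
  fix \<tau> assume "\<tau> \<in> A_set L M \<pi> x y a"
  then have \<tau>: "\<tau> \<in> Aut L M" "\<forall>\<psi>\<in>\<pi>. sat L M (pair_asg x y (\<tau> \<circ> a) a) \<psi>" unfolding A_set_iff by blast+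
  define v where "v z = (if z \<in> range x \<union> range y then pair_asg x y (\<tau> \<circ> a) a z else default_asg L M z)" for z
  have agree: "sat L M v \<chi> = sat L M (pair_asg x y (\<tau> \<circ> a) a) \<chi>" if "fm_in L x y \<chi>" for \<chi>
    by (rule sat_cong) (use that in \<open>auto simp: v_def fm_in_def\<close>)
  have "asg_on L M (range x \<union> range y) (pair_asg x y (\<tau> \<circ> a) a)"
    using asg_on_pair_asg[OF inj_x inj_y disjoint_xy sort_xy sorted_tuple_conj[OF \<tau>(1)]
        sorted_tuple_conj[OF id_Aut]] by simp
  then have "assignment L M v"
    using asg_on_default_asg[OF wf] unfolding assignment_def asg_on_def v_def by auto
  moreover have "\<forall>\<psi>\<in>\<pi>. sat L M v \<psi>" using \<tau>(2) agree fm by blast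
  ultimately have "sat L M v \<phi>" using ent model unfolding entails_def by blast
  then show "\<tau> \<in> A_set L M {\<phi>} x y a" using \<tau>(1) agree[OF \<phi>] unfolding A_set_iff by simp
qed

lemma Aut_chain_fconj_set:
  assumes "\<forall>k<n. finite (F k)" and "Aut_chain (\<lambda>k. {fconj_set (F k)}) \<epsilon> n \<sigma> g"
  shows "Aut_chain F \<epsilon> n \<sigma> g"
  using assms sat_fconj_set[OF wf] unfolding Aut_chain_def sat_pow_def by (auto split: if_splits)

end

section \<open>Blocks of fresh variables and compactness\<close>

locale chain_blocks = monster_tuple L T M K x y a
  for L :: "('s,'f,'r,'v) lang" and T M K and x y :: "'i \<Rightarrow> 'v" and a +
  fixes n :: nat and bvar :: "nat \<Rightarrow> 'i \<Rightarrow> 'v" and avoided :: "'v set"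
  assumes blocks_inj: "inj_on (case_prod bvar) ({..n} \<times> UNIV)"
    and blocks_sort: "\<forall>k\<le>n. \<forall>i. vsort L (bvar k i) = vsort L (x i)"
    and blocks_avoid: "\<forall>k\<le>n. range (bvar k) \<inter> avoided = {}"
    and avoided_finite: "finite avoided"
begin

definition block_vars :: "'v set" where
  "block_vars = (\<Union>k\<le>n. range (bvar k))"

lemma bvar_eq_iff: "k \<le> n \<Longrightarrow> k' \<le> n \<Longrightarrow> bvar k i = bvar k' i' \<longleftrightarrow> k = k' \<and> i = i'"
  using blocks_inj unfolding inj_on_def by auto

lemma inj_bvar: "k \<le> n \<Longrightarrow> inj (bvar k)"
  by (rule injI) (use bvar_eq_iff in blast)

lemma block_range_small: "range (bvar k) \<prec> K"
  using lesspoll_trans1[OF image_lepoll index_small] .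

lemma block_vars_small: "block_vars \<union> avoided \<prec> K"
proof -
  have "block_vars \<prec> K"
    unfolding block_vars_def by (rule UN_lesspoll[OF infinite_K]) (simp_all add: block_range_small)
  then show ?thesis by (rule finite_Un_lesspoll[OF infinite_K _ avoided_finite])
qed

definition block_asg :: "(nat \<Rightarrow> 'i \<Rightarrow> 'a) \<Rightarrow> 'v \<Rightarrow> 'a" where
  "block_asg E z = (if z \<in> block_vars then case_prod E (inv_into ({..n} \<times> UNIV) (case_prod bvar) z)
     else default_asg L M z)"

lemma block_asg_bvar: "k \<le> n \<Longrightarrow> block_asg E (bvar k i) = E k i"
  unfolding block_asg_def block_vars_def using inv_into_f_f[OF blocks_inj, of "(k, i)"] by auto

lemma block_asg_cong:
  assumes "\<forall>k\<le>n. k \<notin> I \<longrightarrow> E k = E' k" and "z \<notin> (\<Union>k\<in>I. range (bvar k))"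
  shows "block_asg E z = block_asg E' z"
proof (cases "z \<in> block_vars")
  case True
  then obtain k i where ki: "k \<le> n" "z = bvar k i" unfolding block_vars_def by blast
  then have "k \<notin> I" using assms(2) by blast
  then show ?thesis using assms(1) ki block_asg_bvar by simp
qed (simp add: block_asg_def)

lemma asg_on_block_asg:
  assumes "\<forall>k\<le>n. sorted_tuple L M x (E k)"
  shows "asg_on L M W (block_asg E)"
  unfolding asg_on_def
proof
  fix z assume "z \<in> W"
  show "block_asg E z \<in> carr M \<and> esort M (block_asg E z) = vsort L z"
  proof (cases "z \<in> block_vars")
    case True
    then obtain k i where "k \<le> n" "z = bvar k i" unfolding block_vars_def by blast
    then show ?thesis using assms blocks_sort block_asg_bvar unfolding sorted_tuple_def by simp
  next
    case False
    then show ?thesis using asg_on_default_asg[OF wf, of UNIV] unfolding block_asg_def asg_on_def by simp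
  qed
qed

definition block_type :: "nat \<Rightarrow> ('f,'r,'v) fm set" where
  "block_type k = {\<chi>. wf_fm L \<chi> \<and> fv \<chi> \<subseteq> range (bvar k) \<and> sat L M (block_asg (\<lambda>_. a)) \<chi>}"

lemma sat_block_type:
  assumes k: "k \<le> n" and g: "g \<in> Aut L M" and v: "v \<circ> bvar k = g \<circ> a" and \<chi>: "\<chi> \<in> block_type k"
  shows "sat L M v \<chi>"
proof -
  have fv\<chi>: "fv \<chi> \<subseteq> range (bvar k)" and wf\<chi>: "wf_fm L \<chi>" using \<chi> unfolding block_type_def by auto
  have "sat L M v \<chi> = sat L M (g \<circ> block_asg (\<lambda>_. a)) \<chi>"
  proof (rule sat_cong, intro ballI)
    fix z assume "z \<in> fv \<chi>"
    then obtain i where "z = bvar k i" using fv\<chi> by blast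
    then show "v z = (g \<circ> block_asg (\<lambda>_. a)) z" using v k block_asg_bvar by (metis comp_apply)
  qed
  also have "\<dots> = sat L M (block_asg (\<lambda>_. a)) \<chi>"
    using asg_on_block_asg sorted_tuple_conj[OF id_Aut] by (intro sat_Aut[OF g wf wf\<chi>]) simp
  finally show ?thesis using \<chi> unfolding block_type_def by simp
qed

lemma block_type_conj:
  assumes k: "k \<le> n" and v: "asg_on L M (range (bvar k)) v" and sat: "\<forall>\<chi>\<in>block_type k. sat L M v \<chi>"
  shows "\<exists>g\<in>Aut L M. v \<circ> bvar k = g \<circ> a"
proof -
  have a_asg: "asg_on L M (range (bvar k)) (block_asg (\<lambda>_. a))"
    using asg_on_block_asg sorted_tuple_conj[OF id_Aut] by simp
  have "sat L M (block_asg (\<lambda>_. a)) \<chi>"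
    if "wf_fm L \<chi>" "fv \<chi> \<subseteq> range (bvar k)" "sat L M v \<chi>" for \<chi>
    using that sat[rule_format, of "FNeg \<chi>"] unfolding block_type_def by auto
  then obtain \<sigma> where \<sigma>: "\<sigma> \<in> Aut L M" "\<forall>w\<in>range (bvar k). \<sigma> (v w) = block_asg (\<lambda>_. a) w"
    using strongly_homogeneous_conjugate[OF homogeneous wf infinite_K sorts_large block_range_small
        v a_asg] by blast
  have "v (bvar k i) = ginv M \<sigma> (a i)" for i
  proof -
    have "\<sigma> (v (bvar k i)) = a i" using \<sigma>(2) block_asg_bvar[OF k] by simp
    then show ?thesis using ginv_left_apply[OF \<sigma>(1), of "v (bvar k i)"] by simp
  qed
  then show ?thesis using ginv_Aut[OF \<sigma>(1)] by (intro bexI[of _ "ginv M \<sigma>"]) auto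
qed

definition link_fm :: "int \<Rightarrow> nat \<Rightarrow> ('f,'r,'v) fm \<Rightarrow> ('f,'r,'v) fm" where
  "link_fm e k \<phi> = (SOME \<chi>. wf_fm L \<chi> \<and> fv \<chi> \<subseteq> range (bvar k) \<union> range (bvar (Suc k)) \<and>
     (\<forall>v. sat L M v \<chi> \<longleftrightarrow> sat_pow L M x y {\<phi>} e (v \<circ> bvar (Suc k)) (v \<circ> bvar k)))"

lemma link_fm:
  assumes k: "k < n" and \<phi>: "fm_in L x y \<phi>"
  shows "wf_fm L (link_fm e k \<phi>) \<and> fv (link_fm e k \<phi>) \<subseteq> range (bvar k) \<union> range (bvar (Suc k)) \<and>
     (\<forall>v. sat L M v (link_fm e k \<phi>) \<longleftrightarrow> sat_pow L M x y {\<phi>} e (v \<circ> bvar (Suc k)) (v \<circ> bvar k))"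
proof -
  have inj: "inj (bvar k)" "inj (bvar (Suc k))" using inj_bvar k by simp_all
  have disj: "range (bvar k) \<inter> range (bvar (Suc k)) = {}" using bvar_eq_iff k by fastforce
  have sx: "\<forall>i. vsort L (bvar k i) = vsort L (x i)" "\<forall>i. vsort L (bvar (Suc k) i) = vsort L (x i)"
    using blocks_sort k by simp_all
  then have sy: "\<forall>i. vsort L (bvar k i) = vsort L (y i)" "\<forall>i. vsort L (bvar (Suc k) i) = vsort L (y i)"
    using sort_xy by simp_all
  have small: "range (bvar k) \<union> range (bvar (Suc k)) \<prec> K"
    using Un_lesspoll[OF infinite_K block_range_small block_range_small] .
  have "\<exists>\<chi>. wf_fm L \<chi> \<and> fv \<chi> \<subseteq> range (bvar k) \<union> range (bvar (Suc k)) \<and>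
     (\<forall>v. sat L M v \<chi> \<longleftrightarrow> sat_pow L M x y {\<phi>} e (v \<circ> bvar (Suc k)) (v \<circ> bvar k))"
  proof (cases "e = 1")
    case True
    show ?thesis
      using rename_pair_fm[OF inj_x inj_y disjoint_xy inj(2,1) _ sx(2) sy(1) _ small infinite_K
          sorts_large \<phi>, of M] disj True unfolding sat_pow_def by (auto simp: Un_commute Int_commute)
  next
    case False
    show ?thesis
      using rename_pair_fm[OF inj_x inj_y disjoint_xy inj disj sx(1) sy(2) _ small infinite_K
          sorts_large \<phi>, of M] False unfolding sat_pow_def by auto
  qed
  then show ?thesis unfolding link_fm_def by (rule someI_ex)
qed

lemma Aut_chain_sat:
  assumes fm: "\<forall>k<n. \<forall>\<phi>\<in>F k. fm_in L x y \<phi>" and g: "Aut_chain F \<epsilon> n \<sigma> g"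
    and v: "\<forall>k\<le>n. v \<circ> bvar k = g k \<circ> a"
  shows "\<forall>k<n. \<forall>\<phi>\<in>F k. sat L M v (link_fm (\<epsilon> k) k \<phi>)"
    and "\<forall>k\<le>n. \<forall>\<chi>\<in>block_type k. sat L M v \<chi>"
proof -
  have g_Aut: "\<forall>k\<le>n. g k \<in> Aut L M"
    and steps: "\<forall>k<n. sat_pow L M x y (F k) (\<epsilon> k) (g (Suc k) \<circ> a) (g k \<circ> a)"
    using g unfolding Aut_chain_def by auto
  show "\<forall>k<n. \<forall>\<phi>\<in>F k. sat L M v (link_fm (\<epsilon> k) k \<phi>)"
  proof (intro allI impI ballI)
    fix k \<phi> assume k: "k < n" and \<phi>: "\<phi> \<in> F k"
    have "sat_pow L M x y {\<phi>} (\<epsilon> k) (g (Suc k) \<circ> a) (g k \<circ> a)"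
      using steps k \<phi> sat_pow_iff_singletons by blast
    then have "sat_pow L M x y {\<phi>} (\<epsilon> k) (v \<circ> bvar (Suc k)) (v \<circ> bvar k)"
      using v k by (simp add: Suc_leI)
    then show "sat L M v (link_fm (\<epsilon> k) k \<phi>)" using link_fm[OF k, of \<phi> "\<epsilon> k"] fm k \<phi> by blast
  qed
  show "\<forall>k\<le>n. \<forall>\<chi>\<in>block_type k. sat L M v \<chi>"
    using sat_block_type g_Aut v by blast
qed

lemma Aut_chain_of_solution:
  assumes n: "0 < n" and \<sigma>: "\<sigma> \<in> Aut L M" and fm: "\<forall>k<n. \<forall>\<phi>\<in>\<pi> k. fm_in L x y \<phi>"
    and v0: "v \<circ> bvar 0 = ginv M \<sigma> \<circ> a" and vn: "v \<circ> bvar n = a"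
    and links: "\<forall>k<n. \<forall>\<phi>\<in>\<pi> k. sat L M v (link_fm (\<epsilon> k) k \<phi>)"
    and inner: "\<forall>k. 0 < k \<and> k < n \<longrightarrow> asg_on L M (range (bvar k)) v \<and> (\<forall>\<chi>\<in>block_type k. sat L M v \<chi>)"
  shows "\<exists>g. Aut_chain \<pi> \<epsilon> n \<sigma> g"
proof -
  have "\<forall>k. \<exists>h. 0 < k \<and> k < n \<longrightarrow> h \<in> Aut L M \<and> v \<circ> bvar k = h \<circ> a"
    using block_type_conj inner by (metis less_imp_le)
  then obtain h where h: "\<forall>k. 0 < k \<and> k < n \<longrightarrow> h k \<in> Aut L M \<and> v \<circ> bvar k = h k \<circ> a"
    by (rule choice[THEN exE])
  define g where "g k = (if k = 0 then ginv M \<sigma> else if k = n then id else h k)" for k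
  have g_props: "g k \<in> Aut L M \<and> v \<circ> bvar k = g k \<circ> a" if k: "k \<le> n" for k
  proof -
    consider "k = 0" | "k = n" | "0 < k" "k < n" using k by linarith
    then show ?thesis
    proof cases
      case 1 then show ?thesis using ginv_Aut[OF \<sigma>] v0 g_def by simp
    next
      case 2 then show ?thesis using n id_Aut vn g_def by simp
    next
      case 3 then show ?thesis using h g_def by simp
    qed
  qed
  then have g_Aut: "\<And>k. k \<le> n \<Longrightarrow> g k \<in> Aut L M" and gv: "\<And>k. k \<le> n \<Longrightarrow> v \<circ> bvar k = g k \<circ> a"
    by blast+
  have "sat_pow L M x y {\<phi>} (\<epsilon> k) (g (Suc k) \<circ> a) (g k \<circ> a)" if k: "k < n" and \<phi>: "\<phi> \<in> \<pi> k" for k \<phi>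
  proof -
    have "sat L M v (link_fm (\<epsilon> k) k \<phi>)" using links k \<phi> by blast
    then have "sat_pow L M x y {\<phi>} (\<epsilon> k) (v \<circ> bvar (Suc k)) (v \<circ> bvar k)"
      using link_fm[OF k, of \<phi> "\<epsilon> k"] fm k \<phi> by blast
    then show ?thesis using gv[of k] gv[of "Suc k"] k by simp
  qed
  then have "\<forall>k<n. sat_pow L M x y (\<pi> k) (\<epsilon> k) (g (Suc k) \<circ> a) (g k \<circ> a)"
    using sat_pow_iff_singletons by blast
  moreover have "g 0 = ginv M \<sigma>" "g n = id" using n unfolding g_def by simp_all
  ultimately have "Aut_chain \<pi> \<epsilon> n \<sigma> g" using g_Aut unfolding Aut_chain_def by blast
  then show ?thesis by blast
qed

lemma bvar_in_blocks_iff: "k \<le> n \<Longrightarrow> I \<subseteq> {..n} \<Longrightarrow> bvar k i \<in> (\<Union>j\<in>I. range (bvar j)) \<longleftrightarrow> k \<in> I"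
  using bvar_eq_iff by blast

lemma block_asg_comp: "k \<le> n \<Longrightarrow> block_asg E \<circ> bvar k = E k"
  using block_asg_bvar by fastforce

lemma wf_fv_link_fm_block_type:
  assumes fm: "\<forall>k<n. \<forall>\<phi>\<in>\<pi> k. fm_in L x y \<phi>"
  shows "\<forall>\<phi>\<in>(\<Union>k<n. link_fm (\<epsilon> k) k ` \<pi> k) \<union> (\<Union>k\<le>n. block_type k). wf_fm L \<phi> \<and> fv \<phi> \<subseteq> block_vars"
proof
  fix \<phi> assume "\<phi> \<in> (\<Union>k<n. link_fm (\<epsilon> k) k ` \<pi> k) \<union> (\<Union>k\<le>n. block_type k)"
  then consider k \<psi> where "k < n" "\<psi> \<in> \<pi> k" "\<phi> = link_fm (\<epsilon> k) k \<psi>" | k where "k \<le> n" "\<phi> \<in> block_type k"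
    by blast
  then show "wf_fm L \<phi> \<and> fv \<phi> \<subseteq> block_vars"
  proof cases
    case 1
    then have "range (bvar k) \<union> range (bvar (Suc k)) \<subseteq> block_vars"
      unfolding block_vars_def by (intro Un_least UN_upper) simp_all
    then show ?thesis using link_fm[OF 1(1), of \<psi> "\<epsilon> k"] fm 1 by blast
  next
    case 2 then show ?thesis unfolding block_type_def block_vars_def by blast
  qed
qed

lemma solution_of_Aut_chain:
  assumes n: "0 < n" and fm: "\<forall>k<n. \<forall>\<phi>\<in>F k. fm_in L x y \<phi>" and g: "Aut_chain F \<epsilon> n \<sigma> g"
  shows "solution L M (\<Union>k\<in>{0<..<n}. range (bvar k)) (block_asg (\<lambda>k. if k = 0 then ginv M \<sigma> \<circ> a else a))
    ((\<Union>k<n. link_fm (\<epsilon> k) k ` F k) \<union> (\<Union>k\<in>{0<..<n}. block_type k)) (block_asg (\<lambda>k. g k \<circ> a))"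
proof -
  have g_Aut: "\<forall>k\<le>n. g k \<in> Aut L M" and g0: "g 0 = ginv M \<sigma>" and gn: "g n = id"
    using g unfolding Aut_chain_def by auto
  have vg: "\<forall>k\<le>n. block_asg (\<lambda>k. g k \<circ> a) \<circ> bvar k = g k \<circ> a" using block_asg_comp by blast
  have "asg_on L M (\<Union>k\<in>{0<..<n}. range (bvar k)) (block_asg (\<lambda>k. g k \<circ> a))"
    by (rule asg_on_block_asg) (simp add: sorted_tuple_conj g_Aut)
  moreover have "block_asg (\<lambda>k. g k \<circ> a) w = block_asg (\<lambda>k. if k = 0 then ginv M \<sigma> \<circ> a else a) w"
    if "w \<notin> (\<Union>k\<in>{0<..<n}. range (bvar k))" for w
    using that g0 gn n by (intro block_asg_cong) auto
  moreover have "\<forall>\<phi>\<in>(\<Union>k<n. link_fm (\<epsilon> k) k ` F k) \<union> (\<Union>k\<in>{0<..<n}. block_type k).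
      sat L M (block_asg (\<lambda>k. g k \<circ> a)) \<phi>"
  proof
    fix \<phi> assume "\<phi> \<in> (\<Union>k<n. link_fm (\<epsilon> k) k ` F k) \<union> (\<Union>k\<in>{0<..<n}. block_type k)"
    then consider k \<psi> where "k < n" "\<psi> \<in> F k" "\<phi> = link_fm (\<epsilon> k) k \<psi>"
      | k where "k < n" "\<phi> \<in> block_type k" by auto
    then show "sat L M (block_asg (\<lambda>k. g k \<circ> a)) \<phi>"
    proof cases
      case 1 then show ?thesis using Aut_chain_sat(1)[OF fm g vg] by blast
    next
      case 2 then show ?thesis using Aut_chain_sat(2)[OF fm g vg] less_imp_le[of k n] by blast
    qed
  qed
  ultimately show ?thesis unfolding solution_def by blast
qed

lemma Aut_chain_compact:
  assumes n: "0 < n" and \<sigma>: "\<sigma> \<in> Aut L M" and fm: "\<forall>k<n. \<forall>\<phi>\<in>\<pi> k. fm_in L x y \<phi>"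
    and fin: "\<forall>F. (\<forall>k<n. F k \<subseteq> \<pi> k \<and> finite (F k)) \<longrightarrow> (\<exists>g. Aut_chain F \<epsilon> n \<sigma> g)"
  shows "\<exists>g. Aut_chain \<pi> \<epsilon> n \<sigma> g"
proof -
  define W where "W = (\<Union>k\<in>{0<..<n}. range (bvar k))"
  define e0 where "e0 = block_asg (\<lambda>k. if k = 0 then ginv M \<sigma> \<circ> a else a)"
  define types where "types = (\<Union>k\<in>{0<..<n}. block_type k)"
  let ?links = "\<lambda>F. \<Union>k<n. link_fm (\<epsilon> k) k ` F k"
  have fin_sol: "\<forall>\<Phi>0\<subseteq>?links \<pi> \<union> types. finite \<Phi>0 \<longrightarrow> (\<exists>v. solution L M W e0 \<Phi>0 v)"
  proof (intro allI impI)
    fix \<Phi>0 assume \<Phi>0: "\<Phi>0 \<subseteq> ?links \<pi> \<union> types" "finite \<Phi>0"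
    obtain F where F: "\<forall>k<n. F k \<subseteq> \<pi> k \<and> finite (F k)" "\<Phi>0 \<subseteq> ?links F \<union> types"
      using finite_subset_UN_image[OF \<Phi>0(2,1)] by blast
    then obtain g where g: "Aut_chain F \<epsilon> n \<sigma> g" using fin by blast
    have "\<forall>k<n. \<forall>\<phi>\<in>F k. fm_in L x y \<phi>" using fm F(1) by blast
    then have "solution L M W e0 (?links F \<union> types) (block_asg (\<lambda>k. g k \<circ> a))"
      unfolding W_def e0_def types_def by (rule solution_of_Aut_chain[OF n _ g])
    then show "\<exists>v. solution L M W e0 \<Phi>0 v" using solution_mono F(2) by blast
  qed
  have WV: "W \<subseteq> block_vars \<union> avoided" unfolding W_def block_vars_def by force
  have fvs: "\<forall>\<phi>\<in>?links \<pi> \<union> types. wf_fm L \<phi> \<and> fv \<phi> \<subseteq> block_vars \<union> avoided"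
    using wf_fv_link_fm_block_type[OF fm, of \<epsilon>] unfolding types_def by fastforce
  have e0: "asg_on L M (block_vars \<union> avoided - W) e0"
    unfolding e0_def by (rule asg_on_block_asg) (simp add: sorted_tuple_conj ginv_Aut[OF \<sigma>] sorted_tuple_a)
  obtain v where v: "solution L M W e0 (?links \<pi> \<union> types) v"
    using saturated_realizes[OF saturated wf infinite_K block_vars_small WV fvs e0 fin_sol] by (elim exE)
  have v_off: "v \<circ> bvar k = e0 \<circ> bvar k" if "k = 0 \<or> k = n" for k
    using v that n bvar_in_blocks_iff[of k "{0<..<n}"] unfolding solution_def W_def by fastforce
  show ?thesis
  proof (rule Aut_chain_of_solution[OF n \<sigma> fm])
    show "v \<circ> bvar 0 = ginv M \<sigma> \<circ> a" "v \<circ> bvar n = a"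
      using v_off block_asg_comp n unfolding e0_def by auto
    show "\<forall>k<n. \<forall>\<phi>\<in>\<pi> k. sat L M v (link_fm (\<epsilon> k) k \<phi>)"
      using v unfolding solution_def by blast
    show "\<forall>k. 0 < k \<and> k < n \<longrightarrow> asg_on L M (range (bvar k)) v \<and> (\<forall>\<chi>\<in>block_type k. sat L M v \<chi>)"
      using v unfolding solution_def asg_on_def W_def types_def by auto
  qed
qed

end

text \<open>For part (ii), the automorphism \<open>\<sigma>\<close> itself becomes unknown: besides the inner blocks,
  block \<open>0\<close> (standing for \<open>\<sigma>\<^sup>-\<^sup>1 a\<close>) and the variables carrying the fixed parameters of the
  relatively definable set (standing for their images under \<open>\<sigma>\<^sup>-\<^sup>1\<close>) are solved for.\<close>

locale avoiding_blocks = chain_blocks L T M K x y a n bvar "fv \<psi>"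
  for L :: "('s,'f,'r,'v) lang" and T M K and x y :: "'i \<Rightarrow> 'v" and a n bvar
    and \<psi> :: "('f,'r,'v) fm" +
  fixes U :: "'v set" and d e :: "'v \<Rightarrow> 'a"
  assumes \<psi>_wf: "wf_fm L \<psi>"
    and d_sorted: "\<forall>z\<in>fv \<psi> \<inter> U. d z \<in> carr M \<and> esort M (d z) = vsort L z"
    and e_sorted: "\<forall>z\<in>fv \<psi> - U. e z \<in> carr M \<and> esort M (e z) = vsort L z"
begin

definition params :: "'v set" where
  "params = fv \<psi> - U"

definition unknowns :: "'v set" where
  "unknowns = (\<Union>k<n. range (bvar k)) \<union> params"

definition start_asg :: "'v \<Rightarrow> 'a" where
  "start_asg z = (if z \<in> params then e z else block_asg (\<lambda>_. a) z)"

definition start_type :: "('f,'r,'v) fm set" where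
  "start_type = {\<chi>. wf_fm L \<chi> \<and> fv \<chi> \<subseteq> range (bvar 0) \<union> params \<and> sat L M start_asg \<chi>}"

definition fixed_asg :: "'v \<Rightarrow> 'a" where
  "fixed_asg z = (if z \<in> fv \<psi> \<inter> U then d z else block_asg (\<lambda>_. a) z)"

definition conditions :: "(nat \<Rightarrow> ('f,'r,'v) fm set) \<Rightarrow> (nat \<Rightarrow> int) \<Rightarrow> ('f,'r,'v) fm set" where
  "conditions F \<epsilon> = (\<Union>k<n. link_fm (\<epsilon> k) k ` F k) \<union> (\<Union>k\<in>{0<..<n}. block_type k) \<union> start_type \<union> {FNeg \<psi>}"

lemma bvar_notin_fv: "k \<le> n \<Longrightarrow> bvar k i \<notin> fv \<psi>"
  using blocks_avoid by blast

lemma params_small: "range (bvar 0) \<union> params \<prec> K"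
  unfolding params_def using finite_Un_lesspoll[OF infinite_K block_range_small] finite_fv by blast

lemma asg_on_start_asg: "asg_on L M (range (bvar 0) \<union> params) start_asg"
  using asg_on_block_asg[of "\<lambda>_. a"] sorted_tuple_a e_sorted
  unfolding asg_on_def start_asg_def params_def by auto

lemma sat_rel_asg_iff:
  assumes "\<sigma> \<in> Aut L M" and "\<forall>z\<in>fv \<psi> \<inter> U. v z = d z" and "\<forall>z\<in>params. \<sigma> (v z) = e z"
    and "asg_on L M (fv \<psi>) v"
  shows "sat L M (rel_asg U d e \<sigma>) \<psi> \<longleftrightarrow> sat L M v \<psi>"
proof -
  have "sat L M (rel_asg U d e \<sigma>) \<psi> = sat L M (\<sigma> \<circ> v) \<psi>"
    by (rule sat_cong) (use assms(2,3) in \<open>auto simp: rel_asg_def params_def\<close>)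
  also have "\<dots> = sat L M v \<psi>" by (rule sat_Aut[OF assms(1) wf \<psi>_wf assms(4)])
  finally show ?thesis .
qed

lemma sat_start_type:
  assumes \<sigma>: "\<sigma> \<in> Aut L M" and v0: "\<And>i. v (bvar 0 i) = ginv M \<sigma> (a i)"
    and v_params: "\<And>z. z \<in> params \<Longrightarrow> v z = ginv M \<sigma> (e z)" and \<chi>: "\<chi> \<in> start_type"
  shows "sat L M v \<chi>"
proof -
  have \<chi>': "wf_fm L \<chi>" "fv \<chi> \<subseteq> range (bvar 0) \<union> params" "sat L M start_asg \<chi>"
    using \<chi> unfolding start_type_def by auto
  have "sat L M v \<chi> = sat L M (ginv M \<sigma> \<circ> start_asg) \<chi>"
  proof (rule sat_cong, intro ballI)
    fix z assume "z \<in> fv \<chi>"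
    then consider i where "z = bvar 0 i" | "z \<in> params" using \<chi>'(2) by blast
    then show "v z = (ginv M \<sigma> \<circ> start_asg) z"
    proof cases
      case 1
      then have "z \<notin> params" using bvar_notin_fv[of 0] unfolding params_def by blast
      then show ?thesis using 1 v0 block_asg_bvar[of 0] by (simp add: start_asg_def)
    qed (simp add: v_params start_asg_def)
  qed
  also have "\<dots> = sat L M start_asg \<chi>"
    by (rule sat_Aut[OF ginv_Aut[OF \<sigma>] wf \<chi>'(1) asg_on_subset[OF asg_on_start_asg \<chi>'(2)]])
  finally show ?thesis using \<chi>'(3) by simp
qed

lemma start_conjugate:
  assumes v: "asg_on L M (range (bvar 0) \<union> params) v" and sat: "\<forall>\<chi>\<in>start_type. sat L M v \<chi>"
  shows "\<exists>\<sigma>\<in>Aut L M. v \<circ> bvar 0 = ginv M \<sigma> \<circ> a \<and> (\<forall>z\<in>params. \<sigma> (v z) = e z)"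
proof -
  have "sat L M start_asg \<chi>" if "wf_fm L \<chi>" "fv \<chi> \<subseteq> range (bvar 0) \<union> params" "sat L M v \<chi>" for \<chi>
    using that sat[rule_format, of "FNeg \<chi>"] unfolding start_type_def by auto
  then obtain \<sigma> where \<sigma>: "\<sigma> \<in> Aut L M" "\<forall>w\<in>range (bvar 0) \<union> params. \<sigma> (v w) = start_asg w"
    using strongly_homogeneous_conjugate[OF homogeneous wf infinite_K sorts_large params_small
        v asg_on_start_asg] by blast
  have "v \<circ> bvar 0 = ginv M \<sigma> \<circ> a"
  proof
    fix i
    have "bvar 0 i \<notin> params" using bvar_notin_fv[of 0] unfolding params_def by blast
    then have "\<sigma> (v (bvar 0 i)) = a i" using \<sigma>(2) block_asg_bvar[of 0] by (simp add: start_asg_def)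
    then show "(v \<circ> bvar 0) i = (ginv M \<sigma> \<circ> a) i" using ginv_left_apply[OF \<sigma>(1)] by (metis comp_apply)
  qed
  moreover have "\<forall>z\<in>params. \<sigma> (v z) = e z" using \<sigma>(2) by (simp add: start_asg_def)
  ultimately show ?thesis using \<sigma>(1) by blast
qed

lemma solution_of_avoiding_chain:
  assumes fm: "\<forall>k<n. \<forall>\<phi>\<in>F k. fm_in L x y \<phi>" and \<sigma>: "\<sigma> \<in> Aut L M"
    and avoid: "\<not> sat L M (rel_asg U d e \<sigma>) \<psi>" and g: "Aut_chain F \<epsilon> n \<sigma> g"
  shows "\<exists>v. solution L M unknowns fixed_asg (conditions F \<epsilon>) v"
proof -
  have g_Aut: "\<forall>k\<le>n. g k \<in> Aut L M" and g0: "g 0 = ginv M \<sigma>" and gn: "g n = id"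
    using g unfolding Aut_chain_def by auto
  define v where "v z = (if z \<in> fv \<psi> \<inter> U then d z else if z \<in> params then ginv M \<sigma> (e z)
    else block_asg (\<lambda>k. g k \<circ> a) z)" for z
  have vg: "\<forall>k\<le>n. v \<circ> bvar k = g k \<circ> a"
    using bvar_notin_fv block_asg_bvar unfolding v_def params_def by auto
  have v_params: "v z = ginv M \<sigma> (e z)" if "z \<in> params" for z
    using that unfolding v_def params_def by simp
  have ginv_e: "ginv M \<sigma> (e z) \<in> carr M \<and> esort M (ginv M \<sigma> (e z)) = vsort L z" if "z \<in> params" for z
    using that e_sorted AutD(1,3)[OF ginv_Aut[OF \<sigma>]] unfolding params_def bij_betw_def by auto
  have "asg_on L M unknowns v"
    unfolding asg_on_def
  proof
    fix w assume "w \<in> unknowns"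
    then consider k i where "k < n" "w = bvar k i" | "w \<in> params" unfolding unknowns_def by blast
    then show "v w \<in> carr M \<and> esort M (v w) = vsort L w"
    proof cases
      case 1
      then have "v w = g k (a i)" using fun_cong[OF vg[rule_format, of k], of i] by simp
      then show ?thesis using 1 sorted_tuple_conj g_Aut blocks_sort unfolding sorted_tuple_def
        by (auto dest: less_imp_le)
    next
      case 2 then show ?thesis using v_params ginv_e by simp
    qed
  qed
  moreover have "v w = fixed_asg w" if "w \<notin> unknowns" for w
  proof -
    have "w \<notin> (\<Union>k\<in>{..<n}. range (bvar k))" "w \<notin> params" using that unfolding unknowns_def by auto
    moreover have "block_asg (\<lambda>k. g k \<circ> a) w = block_asg (\<lambda>_. a) w"
      using calculation(1) gn by (intro block_asg_cong) auto
    ultimately show ?thesis unfolding v_def fixed_asg_def by simp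
  qed
  moreover have "sat L M v \<phi>" if \<phi>: "\<phi> \<in> conditions F \<epsilon>" for \<phi>
  proof -
    consider k \<phi>' where "k < n" "\<phi>' \<in> F k" "\<phi> = link_fm (\<epsilon> k) k \<phi>'"
      | k where "0 < k" "k < n" "\<phi> \<in> block_type k" | "\<phi> \<in> start_type" | "\<phi> = FNeg \<psi>"
      using \<phi> unfolding conditions_def by auto
    then show ?thesis
    proof cases
      case 1 then show ?thesis using Aut_chain_sat(1)[OF fm g vg] by blast
    next
      case 2 then show ?thesis using Aut_chain_sat(2)[OF fm g vg] less_imp_le[of k n] by blast
    next
      case 3
      have "v (bvar 0 i) = ginv M \<sigma> (a i)" for i using fun_cong[OF vg[rule_format, OF le0], of i] g0 by simp
      then show ?thesis using sat_start_type[OF \<sigma> _ _ 3] v_params by blast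
    next
      case 4
      have "asg_on L M (fv \<psi>) v"
        using d_sorted ginv_e v_params unfolding asg_on_def v_def params_def by auto
      then have "sat L M (rel_asg U d e \<sigma>) \<psi> \<longleftrightarrow> sat L M v \<psi>"
        using ginv_right_apply[OF \<sigma>] v_params by (intro sat_rel_asg_iff[OF \<sigma>]) (auto simp: v_def)
      then show ?thesis using 4 avoid by simp
    qed
  qed
  ultimately show ?thesis unfolding solution_def by blast
qed

lemma avoiding_chain_of_solution:
  assumes n: "0 < n" and fm: "\<forall>k<n. \<forall>\<phi>\<in>\<pi> k. fm_in L x y \<phi>"
    and v: "solution L M unknowns fixed_asg (conditions \<pi> \<epsilon>) v"
  shows "\<exists>\<sigma>\<in>Aut L M. \<not> sat L M (rel_asg U d e \<sigma>) \<psi> \<and> (\<exists>g. Aut_chain \<pi> \<epsilon> n \<sigma> g)"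
proof -
  have v_asg: "asg_on L M unknowns v" and v_fixed: "\<And>w. w \<notin> unknowns \<Longrightarrow> v w = fixed_asg w"
    and v_sat: "\<And>\<phi>. \<phi> \<in> conditions \<pi> \<epsilon> \<Longrightarrow> sat L M v \<phi>"
    using v unfolding solution_def by auto
  have start_unknowns: "range (bvar 0) \<union> params \<subseteq> unknowns" using n unfolding unknowns_def by blast
  have "\<forall>\<chi>\<in>start_type. sat L M v \<chi>" using v_sat unfolding conditions_def by blast
  then obtain \<sigma> where \<sigma>: "\<sigma> \<in> Aut L M" "v \<circ> bvar 0 = ginv M \<sigma> \<circ> a" "\<forall>z\<in>params. \<sigma> (v z) = e z"
    using start_conjugate[OF asg_on_subset[OF v_asg start_unknowns]] by blast
  have "v \<circ> bvar 0 = ginv M \<sigma> \<circ> a" by (rule \<sigma>(2))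
  moreover have "v \<circ> bvar n = a"
  proof
    fix i
    have "bvar n i \<notin> (\<Union>k\<in>{..<n}. range (bvar k))" using bvar_in_blocks_iff[of n "{..<n}" i] by fastforce
    moreover have "bvar n i \<notin> fv \<psi>" using bvar_notin_fv[of n] by blast
    ultimately have "bvar n i \<notin> unknowns" "bvar n i \<notin> fv \<psi>" unfolding unknowns_def params_def by auto
    then show "(v \<circ> bvar n) i = a i" using v_fixed block_asg_bvar[of n] by (simp add: fixed_asg_def)
  qed
  moreover have "\<forall>k<n. \<forall>\<phi>\<in>\<pi> k. sat L M v (link_fm (\<epsilon> k) k \<phi>)"
    using v_sat unfolding conditions_def by blast
  moreover have "\<forall>k. 0 < k \<and> k < n \<longrightarrow> asg_on L M (range (bvar k)) v \<and> (\<forall>\<chi>\<in>block_type k. sat L M v \<chi>)"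
  proof (intro allI impI conjI ballI)
    fix k assume k: "0 < k \<and> k < n"
    show "asg_on L M (range (bvar k)) v"
      by (rule asg_on_subset[OF v_asg]) (use k in \<open>auto simp: unknowns_def\<close>)
    fix \<chi> assume "\<chi> \<in> block_type k"
    then have "\<chi> \<in> conditions \<pi> \<epsilon>" using k unfolding conditions_def by auto
    then show "sat L M v \<chi>" by (rule v_sat)
  qed
  ultimately have "\<exists>g. Aut_chain \<pi> \<epsilon> n \<sigma> g" by (rule Aut_chain_of_solution[OF n \<sigma>(1) fm])
  moreover have "\<not> sat L M (rel_asg U d e \<sigma>) \<psi>"
  proof -
    have U_fixed: "v z = d z" if "z \<in> fv \<psi> \<inter> U" for z
    proof -
      have "z \<notin> unknowns"
        using that bvar_notin_fv unfolding unknowns_def params_def by (auto dest: less_imp_le)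
      then show ?thesis using that v_fixed by (simp add: fixed_asg_def)
    qed
    have "asg_on L M (fv \<psi>) v"
      using d_sorted U_fixed asg_on_subset[OF v_asg, of params] unfolding asg_on_def unknowns_def params_def
      by auto
    then have "sat L M (rel_asg U d e \<sigma>) \<psi> \<longleftrightarrow> sat L M v \<psi>"
      using U_fixed \<sigma>(3) by (intro sat_rel_asg_iff[OF \<sigma>(1)]) auto
    then show ?thesis using v_sat[of "FNeg \<psi>"] unfolding conditions_def by auto
  qed
  ultimately show ?thesis using \<sigma>(1) by blast
qed

lemma Aut_chain_compact_avoiding:
  assumes n: "0 < n" and fm: "\<forall>k<n. \<forall>\<phi>\<in>\<pi> k. fm_in L x y \<phi>"
    and fin: "\<forall>F. (\<forall>k<n. F k \<subseteq> \<pi> k \<and> finite (F k)) \<longrightarrow>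
       (\<exists>\<sigma>\<in>Aut L M. \<not> sat L M (rel_asg U d e \<sigma>) \<psi> \<and> (\<exists>g. Aut_chain F \<epsilon> n \<sigma> g))"
  shows "\<exists>\<sigma>\<in>Aut L M. \<not> sat L M (rel_asg U d e \<sigma>) \<psi> \<and> (\<exists>g. Aut_chain \<pi> \<epsilon> n \<sigma> g)"
proof -
  let ?links = "\<lambda>F. \<Union>k<n. link_fm (\<epsilon> k) k ` F k"
  let ?rest = "(\<Union>k\<in>{0<..<n}. block_type k) \<union> start_type \<union> {FNeg \<psi>}"
  have conds: "conditions F \<epsilon> = ?links F \<union> ?rest" for F unfolding conditions_def by blast
  have fin_sol: "\<forall>\<Phi>0\<subseteq>conditions \<pi> \<epsilon>. finite \<Phi>0 \<longrightarrow> (\<exists>v. solution L M unknowns fixed_asg \<Phi>0 v)"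
  proof (intro allI impI)
    fix \<Phi>0 assume \<Phi>0: "\<Phi>0 \<subseteq> conditions \<pi> \<epsilon>" "finite \<Phi>0"
    obtain F where F: "\<forall>k<n. F k \<subseteq> \<pi> k \<and> finite (F k)" "\<Phi>0 \<subseteq> conditions F \<epsilon>"
      using finite_subset_UN_image[OF \<Phi>0(2) \<Phi>0(1)[unfolded conds]] unfolding conds by blast
    then obtain \<sigma> g where \<sigma>: "\<sigma> \<in> Aut L M" "\<not> sat L M (rel_asg U d e \<sigma>) \<psi>" "Aut_chain F \<epsilon> n \<sigma> g"
      using fin by blast
    have "\<forall>k<n. \<forall>\<phi>\<in>F k. fm_in L x y \<phi>" using fm F(1) by blast
    then show "\<exists>v. solution L M unknowns fixed_asg \<Phi>0 v"
      using solution_of_avoiding_chain[OF _ \<sigma>] solution_mono F(2) by blast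
  qed
  have WV: "unknowns \<subseteq> block_vars \<union> fv \<psi>"
    unfolding unknowns_def block_vars_def params_def by force
  have fvs: "\<forall>\<phi>\<in>conditions \<pi> \<epsilon>. wf_fm L \<phi> \<and> fv \<phi> \<subseteq> block_vars \<union> fv \<psi>"
  proof -
    have "range (bvar 0) \<subseteq> block_vars" unfolding block_vars_def by blast
    then have "\<forall>\<phi>\<in>start_type \<union> {FNeg \<psi>}. wf_fm L \<phi> \<and> fv \<phi> \<subseteq> block_vars \<union> fv \<psi>"
      using \<psi>_wf unfolding start_type_def params_def by auto
    moreover have "(\<Union>k\<in>{0<..<n}. block_type k) \<subseteq> (\<Union>k\<le>n. block_type k)" by force
    ultimately show ?thesis
      using wf_fv_link_fm_block_type[OF fm, of \<epsilon>] unfolding conds by blast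
  qed
  have e0: "asg_on L M (block_vars \<union> fv \<psi> - unknowns) fixed_asg"
    using d_sorted asg_on_block_asg[of "\<lambda>_. a"] sorted_tuple_a unfolding asg_on_def fixed_asg_def by auto
  obtain v where "solution L M unknowns fixed_asg (conditions \<pi> \<epsilon>) v"
    using saturated_realizes[OF saturated wf infinite_K block_vars_small WV fvs e0 fin_sol] by (elim exE)
  then show ?thesis by (rule avoiding_chain_of_solution[OF n fm])
qed

end

context monster_tuple
begin

lemma chain_blocks_exist:
  assumes "finite avoided"
  shows "\<exists>bvar. chain_blocks L T M K x y a n bvar avoided"
proof -
  have "{..n} \<times> (UNIV :: 'i set) = (\<Union>k\<in>{..n}. Pair k ` UNIV)" by auto
  also have "\<dots> \<prec> K"
    by (rule UN_lesspoll[OF infinite_K]) (simp_all add: lesspoll_trans1[OF image_lepoll index_small])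
  finally have I: "{..n} \<times> (UNIV :: 'i set) \<prec> K" .
  obtain u where u: "inj_on u ({..n} \<times> UNIV)" "\<forall>j\<in>{..n} \<times> UNIV. vsort L (u j) = vsort L (x (snd j))"
    "u ` ({..n} \<times> UNIV) \<inter> avoided = {}"
    using fresh_vars[OF infinite_K sorts_large I finite_lesspoll_infinite[OF infinite_K assms],
        where srt = "\<lambda>j. vsort L (x (snd j))"] by (elim exE conjE)
  have "chain_blocks L T M K x y a n (curry u) avoided"
  proof (intro chain_blocks.intro chain_blocks_axioms.intro)
    show "monster_tuple L T M K x y a" by (rule monster_tuple_axioms)
    show "inj_on (case_prod (curry u)) ({..n} \<times> UNIV)" using u(1) by simp
    show "\<forall>k\<le>n. \<forall>i. vsort L (curry u k i) = vsort L (x i)" using u(2) by simp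
    show "\<forall>k\<le>n. range (curry u k) \<inter> avoided = {}" using u(3) by auto
  qed (rule assms)
  then show ?thesis by blast
qed

lemma fconj_set_family_entailed:
  assumes fm: "\<forall>k<n. \<forall>\<phi>\<in>\<pi> k. fm_in L x y \<phi>" and F: "\<forall>k<n. F k \<subseteq> \<pi> k \<and> finite (F k)"
  shows "\<forall>k<n. fm_in L x y (fconj_set (F k)) \<and> entails L T (\<pi> k) (fconj_set (F k)) TYPE('a)"
proof (intro allI impI)
  fix k assume "k < n"
  then show "fm_in L x y (fconj_set (F k)) \<and> entails L T (\<pi> k) (fconj_set (F k)) TYPE('a)"
    using F fm by (intro fconj_set_entailed) simp_all
qed

lemma setprods_fconj_set_imp_Aut_chain:
  assumes fm: "\<forall>k<n. \<forall>\<phi>\<in>\<pi> k. fm_in L x y \<phi>" and F: "\<forall>k<n. F k \<subseteq> \<pi> k \<and> finite (F k)"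
    and \<sigma>: "\<sigma> \<in> setprods M (\<lambda>k. A_set L M {fconj_set (F k)} x y a) \<epsilon> n"
  shows "\<sigma> \<in> Aut L M \<and> (\<exists>g. Aut_chain F \<epsilon> n \<sigma> g)"
proof -
  have "\<forall>k<n. \<forall>\<phi>\<in>{fconj_set (F k)}. fm_in L x y \<phi>" using fconj_set_family_entailed[OF fm F] by blast
  then show ?thesis using setprods_imp_Aut_chain[OF _ \<sigma>] Aut_chain_fconj_set F by blast
qed

lemma setprods_eq_Inter:
  assumes fm: "\<forall>i<n. \<forall>\<phi>\<in>\<pi> i. fm_in L x y \<phi>"
  shows "setprods M (\<lambda>i. A_set L M (\<pi> i) x y a) \<epsilon> n =
    \<Inter> {setprods M (\<lambda>i. A_set L M {\<phi> i} x y a) \<epsilon> n | \<phi>.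
          \<forall>i<n. fm_in L x y (\<phi> i) \<and> entails L T (\<pi> i) (\<phi> i) TYPE('a)}"
    (is "?lhs = \<Inter> ?family")
proof
  show "?lhs \<subseteq> \<Inter> ?family"
  proof (rule Inter_greatest)
    fix B assume "B \<in> ?family"
    then obtain \<phi> where B: "B = setprods M (\<lambda>i. A_set L M {\<phi> i} x y a) \<epsilon> n"
      "\<forall>i<n. fm_in L x y (\<phi> i) \<and> entails L T (\<pi> i) (\<phi> i) TYPE('a)" by blast
    have "\<forall>i<n. A_set L M (\<pi> i) x y a \<subseteq> A_set L M {\<phi> i} x y a" using A_set_entailed fm B(2) by blast
    then show "?lhs \<subseteq> B" unfolding B(1) by (rule setprods_mono)
  qed
  show "\<Inter> ?family \<subseteq> ?lhs"
  proof
    fix \<sigma> assume \<sigma>: "\<sigma> \<in> \<Inter> ?family"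
    have in_conj: "\<sigma> \<in> Aut L M \<and> (\<exists>g. Aut_chain F \<epsilon> n \<sigma> g)" if F: "\<forall>k<n. F k \<subseteq> \<pi> k \<and> finite (F k)" for F
    proof -
      have "\<forall>i<n. fm_in L x y (fconj_set (F i)) \<and> entails L T (\<pi> i) (fconj_set (F i)) TYPE('a)"
        by (rule fconj_set_family_entailed[OF fm F])
      then have "setprods M (\<lambda>i. A_set L M {fconj_set (F i)} x y a) \<epsilon> n \<in> ?family"
        by (intro CollectI exI[of _ "\<lambda>i. fconj_set (F i)"]) simp
      then show ?thesis using setprods_fconj_set_imp_Aut_chain[OF fm F] \<sigma> by blast
    qed
    show "\<sigma> \<in> ?lhs"
    proof (cases "n = 0")
      case True
      then have "\<sigma> \<in> Aut L M" "ginv M \<sigma> = id" using in_conj[of "\<lambda>_. {}"] unfolding Aut_chain_def by auto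
      then have "\<sigma> = id" using ginv_ginv[of \<sigma> L M] ginv_id[of M] by simp
      then show ?thesis using True by simp
    next
      case False
      obtain bvar where "chain_blocks L T M K x y a n bvar {}" using chain_blocks_exist by blast
      then interpret chain_blocks L T M K x y a n bvar "{}" .
      have "\<exists>g. Aut_chain \<pi> \<epsilon> n \<sigma> g"
        using Aut_chain_compact[OF _ _ fm] in_conj[of "\<lambda>_. {}"] in_conj False by blast
      then show ?thesis using Aut_chain_imp_setprods[OF fm] in_conj[of "\<lambda>_. {}"] by blast
    qed
  qed
qed

lemma rel_definable_superset_setprods:
  assumes fm: "\<forall>i<n. \<forall>\<phi>\<in>\<pi> i. fm_in L x y \<phi>" and A: "rel_definable L M A"
    and sub: "setprods M (\<lambda>i. A_set L M (\<pi> i) x y a) \<epsilon> n \<subseteq> A"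
  shows "\<exists>\<phi>. (\<forall>i<n. fm_in L x y (\<phi> i) \<and> entails L T (\<pi> i) (\<phi> i) TYPE('a)) \<and>
    setprods M (\<lambda>i. A_set L M {\<phi> i} x y a) \<epsilon> n \<subseteq> A"
proof (rule ccontr)
  assume none: "\<not> ?thesis"
  obtain \<psi> U d e where \<psi>: "wf_fm L \<psi>" and d: "\<forall>z\<in>fv \<psi> \<inter> U. d z \<in> carr M \<and> esort M (d z) = vsort L z"
    and e: "\<forall>z\<in>fv \<psi> - U. e z \<in> carr M \<and> esort M (e z) = vsort L z"
    and A_eq: "A = {\<sigma>\<in>Aut L M. sat L M (rel_asg U d e \<sigma>) \<psi>}"
    using A unfolding rel_definable_def rel_asg_def by blast
  have avoid: "\<exists>\<sigma>\<in>Aut L M. \<not> sat L M (rel_asg U d e \<sigma>) \<psi> \<and> (\<exists>g. Aut_chain F \<epsilon> n \<sigma> g)"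
    if F: "\<forall>k<n. F k \<subseteq> \<pi> k \<and> finite (F k)" for F
  proof -
    have "\<forall>i<n. fm_in L x y (fconj_set (F i)) \<and> entails L T (\<pi> i) (fconj_set (F i)) TYPE('a)"
      by (rule fconj_set_family_entailed[OF fm F])
    then have "\<not> setprods M (\<lambda>i. A_set L M {fconj_set (F i)} x y a) \<epsilon> n \<subseteq> A"
      using none[unfolded not_ex, rule_format, of "\<lambda>i. fconj_set (F i)"] by blast
    then obtain \<sigma> where "\<sigma> \<in> setprods M (\<lambda>i. A_set L M {fconj_set (F i)} x y a) \<epsilon> n" "\<sigma> \<notin> A"
      by blast
    then show ?thesis using setprods_fconj_set_imp_Aut_chain[OF fm F] A_eq by blast
  qed
  have "n \<noteq> 0"
  proof
    assume "n = 0"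
    then have "setprods M (\<lambda>i. A_set L M {undefined} x y a) \<epsilon> n \<subseteq> A" using sub by simp
    then show False using none[unfolded not_ex, rule_format, of "\<lambda>_. undefined"] \<open>n = 0\<close> by simp
  qed
  obtain bvar where "chain_blocks L T M K x y a n bvar (fv \<psi>)" using chain_blocks_exist finite_fv by blast
  then interpret avoiding_blocks L T M K x y a n bvar \<psi> U d e
    using \<psi> d e by (intro avoiding_blocks.intro avoiding_blocks_axioms.intro)
  obtain \<sigma> g where "\<sigma> \<in> Aut L M" "\<not> sat L M (rel_asg U d e \<sigma>) \<psi>" "Aut_chain \<pi> \<epsilon> n \<sigma> g"
    using Aut_chain_compact_avoiding[OF _ fm] avoid \<open>n \<noteq> 0\<close> by blast
  then show False using Aut_chain_imp_setprods[OF fm] sub A_eq by blast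
qed

end

theorem corollary5p8:
  fixes L :: "('s,'f,'r,'v) lang" and T :: "('f,'r,'v) fm set"
    and M :: "('s,'f,'r,'a) struc" and K :: "'k set"
    and x y :: "'i \<Rightarrow> 'v" and a :: "'i \<Rightarrow> 'a"
    and n :: nat and \<pi> :: "nat \<Rightarrow> ('f,'r,'v) fm set" and \<epsilon> :: "nat \<Rightarrow> int"
  assumes "monster L T M K"
    and "(UNIV :: 'i set) \<prec> K"
    and "inj x" and "inj y" and "range x \<inter> range y = {}"
    and "\<forall>i. vsort L (x i) = vsort L (y i)"
    and "\<forall>i. a i \<in> carr M \<and> esort M (a i) = vsort L (x i)"
    and "\<forall>i<n. \<forall>\<phi>\<in>\<pi> i. fm_in L x y \<phi>"
    and "\<forall>i<n. \<epsilon> i \<in> {-1, 1}"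
  shows "(setprods M (\<lambda>i. A_set L M (\<pi> i) x y a) \<epsilon> n =
           \<Inter> {setprods M (\<lambda>i. A_set L M {\<phi> i} x y a) \<epsilon> n | \<phi>.
                 \<forall>i<n. fm_in L x y (\<phi> i) \<and> entails L T (\<pi> i) (\<phi> i) TYPE('a)}) \<and>
         (\<forall>A. rel_definable L M A \<and> setprods M (\<lambda>i. A_set L M (\<pi> i) x y a) \<epsilon> n \<subseteq> A \<longrightarrow>
           (\<exists>\<phi>. (\<forall>i<n. fm_in L x y (\<phi> i) \<and> entails L T (\<pi> i) (\<phi> i) TYPE('a)) \<and>
                setprods M (\<lambda>i. A_set L M {\<phi> i} x y a) \<epsilon> n \<subseteq> A))"
proof -
  interpret monster_tuple L T M K x y a
    using assms(1-7) by unfold_locales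
  show ?thesis
    using setprods_eq_Inter[OF assms(8)] rel_definable_superset_setprods[OF assms(8)] by blast
qed

end
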